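(* Let $d\ge 3$, $F \leq F' \leq \mathrm{Sym}(\Omega)$ with $F'$ preserving each $F$-orbit in $\Omega$, and $n = [F':F]$. Let $G(F,F')$ act on $X_{n,d}$ via the embedding $\varphi$, i.e. $\gamma \cdot (f,e) = (f^\gamma, \gamma e)$ with $(f^\gamma)_v = \alpha(\sigma(\gamma,\gamma^{-1}v)) \cdot f_{\gamma^{-1}v}$. Then: (a) $G(F,F')^\ast$ acts on the vertex set of $X_{n,d}$ with finitely many orbits; if $F$ is transitive on $\Omega$, then $G(F,F')^\ast$ acts transitively on the vertices of $X_{n,d}$. (b) For every $e \in E_d$, the stabilizer of the vertex $((0),e)$ in $G(F,F')$ equals the stabilizer of $e$ in $U(F)$. In particular the action of $G(F,F')$ on $X_{n,d}$ is proper. Consequently, when $F$ is regular, $G(F,F')^\ast$ acts freely and transitively on the vertices of $X_{n,d}$.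
   Context: $\Omega$ is a set with $|\Omega|=d$; $T_d$ is the $d$-regular tree with vertex set $V_d$, edge set $E_d$, with a coloring $c: E_d\to\Omega$ restricting at each vertex $v$ to a bijection from the set $E(v)$ of edges at $v$ onto $\Omega$. Local permutation: $\sigma(g,v) = c|_{E(gv)} \circ g \circ (c|_{E(v)})^{-1}$. $U(F)$: automorphisms with all local permutations in $F$. $G(F,F')$: automorphisms with all local permutations in $F'$ and all but finitely many in $F$, with the topology making the inclusion of $U(F)$ continuous and open; $G(F,F')^\ast$ is its index-two subgroup preserving the bipartition of $T_d$. A permutation group is semi-regular if point stabilizers are trivial, regular if transitive and semi-regular. $\Sigma_n=\{0,\dots,n-1\}$, $\mathfrak S_n=\mathrm{Sym}(\Sigma_n)$; $\alpha: F' \to \mathfrak{S}_n$ is the action of $F'$ on $F'/F$ transported via a fixed bijection $\Sigma_n \to F'/F$ with $0 \mapsto F$. The graph $X_{n,d}$ has vertex set $\Sigma_n^{(V_d)} \times E_d$ ($\Sigma_n^{(V_d)}$ the finitely supported functions $f: V_d\to\Sigma_n$); $(f,e)\sim(f,e')$ (type 1) if $e,e'$ share exactly one vertex, and $(f,e)\sim(f',e)$ (type 2) if $f'$ differs from $f$ at exactly one vertex, which lies in $e$. $(0)$ denotes the zero function. *)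

theory Defs
  imports "HOL-Analysis.Analysis" "HOL-Combinatorics.Permutations"
begin

text \<open>Omega = {..<d}. Vertices of T_d: reduced words over Omega; the edges are
  {w, w @ [a]}, coloured by a. At every vertex the colouring is a bijection onto Omega.\<close>

definition Verts :: "nat \<Rightarrow> nat list set" where
  "Verts d = {w. set w \<subseteq> {..<d} \<and> (\<forall>i. Suc i < length w \<longrightarrow> w ! i \<noteq> w ! Suc i)}"

definition Edges :: "nat \<Rightarrow> nat list set set" where
  "Edges d = {{w, w @ [a]} | w a. w @ [a] \<in> Verts d}"

definition ecol :: "nat list set \<Rightarrow> nat" where
  "ecol e = (THE a. \<exists>w. e = {w, w @ [a]})"

definition nb :: "nat list \<Rightarrow> nat \<Rightarrow> nat list" where
  "nb v a = (if v \<noteq> [] \<and> last v = a then butlast v else v @ [a])"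

text \<open>automorphisms of T_d (extended by the identity outside the vertex set)\<close>
definition aut :: "nat \<Rightarrow> (nat list \<Rightarrow> nat list) \<Rightarrow> bool" where
  "aut d g \<longleftrightarrow> bij_betw g (Verts d) (Verts d)
     \<and> (\<forall>v\<in>Verts d. \<forall>w\<in>Verts d. {g v, g w} \<in> Edges d \<longleftrightarrow> {v, w} \<in> Edges d)
     \<and> (\<forall>x. x \<notin> Verts d \<longrightarrow> g x = x)"

text \<open>local permutation sigma(g,v) = c|E(gv) o g o (c|E(v))^-1, as a permutation of {..<d}\<close>
definition locperm :: "nat \<Rightarrow> (nat list \<Rightarrow> nat list) \<Rightarrow> nat list \<Rightarrow> nat \<Rightarrow> nat" where
  "locperm d g v = (\<lambda>a. if a < d then ecol (g ` {v, nb v a}) else a)"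

definition perm_group :: "nat \<Rightarrow> (nat \<Rightarrow> nat) set \<Rightarrow> bool" where
  "perm_group d F \<longleftrightarrow> F \<subseteq> {p. p permutes {..<d}} \<and> id \<in> F
     \<and> (\<forall>p\<in>F. \<forall>q\<in>F. p \<circ> q \<in> F) \<and> (\<forall>p\<in>F. inv p \<in> F)"

definition transitive_on :: "nat \<Rightarrow> (nat \<Rightarrow> nat) set \<Rightarrow> bool" where
  "transitive_on d F \<longleftrightarrow> (\<forall>a<d. \<forall>b<d. \<exists>p\<in>F. p a = b)"

definition semiregular_on :: "nat \<Rightarrow> (nat \<Rightarrow> nat) set \<Rightarrow> bool" where
  "semiregular_on d F \<longleftrightarrow> (\<forall>p\<in>F. \<forall>a<d. p a = a \<longrightarrow> p = id)"

definition regular_on :: "nat \<Rightarrow> (nat \<Rightarrow> nat) set \<Rightarrow> bool" where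
  "regular_on d F \<longleftrightarrow> transitive_on d F \<and> semiregular_on d F"

definition preserves_orbits :: "nat \<Rightarrow> (nat \<Rightarrow> nat) set \<Rightarrow> (nat \<Rightarrow> nat) set \<Rightarrow> bool" where
  "preserves_orbits d F F' \<longleftrightarrow> (\<forall>p\<in>F'. \<forall>a<d. \<exists>q\<in>F. q a = p a)"

definition lcosets :: "(nat \<Rightarrow> nat) set \<Rightarrow> (nat \<Rightarrow> nat) set \<Rightarrow> (nat \<Rightarrow> nat) set set" where
  "lcosets F' F = {(\<lambda>h. g \<circ> h) ` F | g. g \<in> F'}"

text \<open>alpha : F' \<rightarrow> Sym({..<n}), the action on F'/F transported via beta : {..<n} \<rightarrow> F'/F\<close>
definition alpha :: "(nat \<Rightarrow> (nat \<Rightarrow> nat) set) \<Rightarrow> nat \<Rightarrow> (nat \<Rightarrow> nat) \<Rightarrow> nat \<Rightarrow> nat" where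
  "alpha \<beta> n g i = the_inv_into {..<n} \<beta> ((\<lambda>h. g \<circ> h) ` \<beta> i)"

definition UF :: "nat \<Rightarrow> (nat \<Rightarrow> nat) set \<Rightarrow> (nat list \<Rightarrow> nat list) set" where
  "UF d F = {g. aut d g \<and> (\<forall>v\<in>Verts d. locperm d g v \<in> F)}"

definition GFF :: "nat \<Rightarrow> (nat \<Rightarrow> nat) set \<Rightarrow> (nat \<Rightarrow> nat) set \<Rightarrow> (nat list \<Rightarrow> nat list) set" where
  "GFF d F F' = {g. aut d g \<and> (\<forall>v\<in>Verts d. locperm d g v \<in> F')
                    \<and> finite {v \<in> Verts d. locperm d g v \<notin> F}}"

text \<open>the index-two subgroup preserving the bipartition (type-preserving automorphisms);
  the two classes of the bipartition are the words of even and of odd length\<close>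
definition GFFstar :: "nat \<Rightarrow> (nat \<Rightarrow> nat) set \<Rightarrow> (nat \<Rightarrow> nat) set \<Rightarrow> (nat list \<Rightarrow> nat list) set" where
  "GFFstar d F F' = {g \<in> GFF d F F'. \<forall>v\<in>Verts d. even (length (g v)) \<longleftrightarrow> even (length v)}"

text \<open>Topology on G(F,F'): generated by the left translates h U(F)_S, h \<in> G(F,F'), of the
  pointwise stabilisers U(F)_S of finite vertex sets S (a neighbourhood base of the identity
  of U(F) in the permutation topology). This is the group topology for which the inclusion of
  U(F) is continuous and open.\<close>
definition GFF_top :: "nat \<Rightarrow> (nat \<Rightarrow> nat) set \<Rightarrow> (nat \<Rightarrow> nat) set \<Rightarrow> (nat list \<Rightarrow> nat list) topology" where
  "GFF_top d F F' = subtopology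
     (topology_generated_by
        {(\<lambda>k. h \<circ> k) ` {k \<in> UF d F. \<forall>s\<in>S. k s = s} | h S.
           h \<in> GFF d F F' \<and> finite S \<and> S \<subseteq> Verts d})
     (GFF d F F')"

definition Xverts :: "nat \<Rightarrow> nat \<Rightarrow> ((nat list \<Rightarrow> nat) \<times> nat list set) set" where
  "Xverts n d = {(f, e). (\<forall>v. f v < n) \<and> (\<forall>v. v \<notin> Verts d \<longrightarrow> f v = 0)
                   \<and> finite {v. f v \<noteq> 0} \<and> e \<in> Edges d}"

text \<open>gamma . (f,e) = (f^gamma, gamma e), (f^gamma)_v = alpha(sigma(gamma, gamma^-1 v)) (f (gamma^-1 v))\<close>
definition act :: "nat \<Rightarrow> (nat \<Rightarrow> (nat \<Rightarrow> nat) set) \<Rightarrow> nat \<Rightarrow> (nat list \<Rightarrow> nat list)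
     \<Rightarrow> (nat list \<Rightarrow> nat) \<times> nat list set \<Rightarrow> (nat list \<Rightarrow> nat) \<times> nat list set" where
  "act d \<beta> n \<gamma> x = (\<lambda>v. if v \<in> Verts d
        then alpha \<beta> n (locperm d \<gamma> (inv_into (Verts d) \<gamma> v)) (fst x (inv_into (Verts d) \<gamma> v))
        else 0, \<gamma> ` snd x)"

text \<open>properness of an action of a topological group on a discrete set X:
  preimages of (finite = compact) sets under (g,x) \<mapsto> (gx,x) are compact, equivalently
  all transporters {g. g x = y} are compact\<close>
definition proper_action :: "'g topology \<Rightarrow> ('g \<Rightarrow> 'x \<Rightarrow> 'x) \<Rightarrow> 'x set \<Rightarrow> bool" where
  "proper_action T a X \<longleftrightarrow> (\<forall>x\<in>X. \<forall>y\<in>X. compactin T {g \<in> topspace T. a g x = y})"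

end

theory Submission
  imports Defs
begin

text \<open>Every vertex (f, e) of X_{n,d} is the image of one of the d vertices ((0), {[], [a]}). The
  required type-preserving automorphism is built from the root outwards: at each vertex w one
  chooses a local permutation in the coset of F indexed by f at the image of w, agreeing with the
  local permutation at the parent on the colour of the connecting edge. Orbit preservation makes
  this choice possible, and the automorphism lies in G(F,F') because its local permutations lie in
  F wherever f vanishes. If F is transitive, a = 0 can always be chosen.

  An element of G(F,F') fixes ((0), e) iff all its local permutations fix the trivial coset, i.e.
  lie in F. For semiregular F, an element of G(F,F')* stabilising a vertex fixes an endpoint of the
  edge and a colour there, and semiregularity propagates this rigidity along the tree.

  Properness: a transporter consists of automorphisms moving word lengths by a bounded amount, so
  it is a closed subset of a product of finite discrete spaces; and on it the topology of G(F,F')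
  is that of pointwise convergence, because far from the root all its elements have local
  permutations in F.\<close>

lemma Verts_snoc: "w @ [a] \<in> Verts d \<longleftrightarrow> w \<in> Verts d \<and> a < d \<and> (w \<noteq> [] \<longrightarrow> last w \<noteq> a)"
proof
  assume h: "w @ [a] \<in> Verts d"
  have "w \<in> Verts d"
    unfolding Verts_def
  proof (intro CollectI conjI allI impI)
    show "set w \<subseteq> {..<d}" using h by (auto simp: Verts_def)
    fix i assume i: "Suc i < length w"
    have "(w @ [a]) ! i \<noteq> (w @ [a]) ! Suc i" using h i unfolding Verts_def by simp
    then show "w ! i \<noteq> w ! Suc i" using i by (simp add: nth_append)
  qed
  moreover have "a < d" using h by (auto simp: Verts_def)
  moreover have "last w \<noteq> a" if "w \<noteq> []"
  proof -
    have "Suc (length w - 1) < length (w @ [a])" using \<open>w \<noteq> []\<close> by simp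
    then have "(w @ [a]) ! (length w - 1) \<noteq> (w @ [a]) ! Suc (length w - 1)"
      using h unfolding Verts_def by blast
    then show ?thesis using \<open>w \<noteq> []\<close> by (simp add: nth_append last_conv_nth)
  qed
  ultimately show "w \<in> Verts d \<and> a < d \<and> (w \<noteq> [] \<longrightarrow> last w \<noteq> a)" by blast
next
  assume h: "w \<in> Verts d \<and> a < d \<and> (w \<noteq> [] \<longrightarrow> last w \<noteq> a)"
  show "w @ [a] \<in> Verts d"
    unfolding Verts_def
  proof (intro CollectI conjI allI impI)
    show "set (w @ [a]) \<subseteq> {..<d}" using h by (auto simp: Verts_def)
    fix i assume i: "Suc i < length (w @ [a])"
    show "(w @ [a]) ! i \<noteq> (w @ [a]) ! Suc i"
    proof (cases "Suc i < length w")
      case True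
      then show ?thesis using h by (auto simp: Verts_def nth_append)
    next
      case False
      then have si: "Suc i = length w" and "w \<noteq> []" using i by auto
      then have "i = length w - 1" by simp
      then have "(w @ [a]) ! i = last w" using \<open>w \<noteq> []\<close> by (simp add: nth_append last_conv_nth)
      then show ?thesis using h si \<open>w \<noteq> []\<close> by simp
    qed
  qed
qed

lemma Verts_Nil[simp]: "[] \<in> Verts d"
  by (simp add: Verts_def)

lemma Verts_butlast: "w \<in> Verts d \<Longrightarrow> butlast w \<in> Verts d"
  by (cases w rule: rev_cases) (auto simp: Verts_snoc)

lemma Verts_induct[consumes 1, case_names Nil snoc]:
  assumes "w \<in> Verts d" and "P []"
    and "\<And>w a. w @ [a] \<in> Verts d \<Longrightarrow> P w \<Longrightarrow> P (w @ [a])"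
  shows "P w"
  using assms(1)
proof (induction w rule: rev_induct)
  case Nil then show ?case using assms(2) by simp
next
  case (snoc a w)
  then show ?case using assms(3) Verts_snoc by blast
qed

lemma last_Verts_less: "w \<in> Verts d \<Longrightarrow> w \<noteq> [] \<Longrightarrow> last w < d"
  using last_in_set[of w] unfolding Verts_def by blast

lemma rev_Verts: assumes "r \<in> Verts d" shows "rev r \<in> Verts d"
  unfolding Verts_def
proof (intro CollectI conjI allI impI)
  show "set (rev r) \<subseteq> {..<d}" using assms by (simp add: Verts_def)
  fix i assume i: "Suc i < length (rev r)"
  define j where "j = length r - Suc (Suc i)"
  have j: "Suc j < length r" "Suc j = length r - Suc i" using i unfolding j_def by auto
  have "r ! j \<noteq> r ! Suc j" using assms j(1) by (simp add: Verts_def)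
  moreover have "rev r ! i = r ! Suc j" "rev r ! Suc i = r ! j"
    using i j unfolding j_def by (simp_all add: rev_nth)
  ultimately show "rev r ! i \<noteq> rev r ! Suc i" by simp
qed

lemma finite_Verts_length_le: "finite {v \<in> Verts d. length v \<le> N}"
proof -
  have "{v \<in> Verts d. length v \<le> N} \<subseteq> {xs. set xs \<subseteq> {..<d} \<and> length xs \<le> N}"
    by (auto simp: Verts_def)
  then show ?thesis using finite_lists_length_le[of "{..<d}" N] finite_subset by blast
qed

lemma nb_Verts: "v \<in> Verts d \<Longrightarrow> a < d \<Longrightarrow> nb v a \<in> Verts d"
  by (auto simp: nb_def Verts_butlast Verts_snoc)

lemma nb_snoc_last: "nb (xs @ [a]) a = xs"
  by (simp add: nb_def)

lemma snoc_eq_nb: "w @ [a] \<in> Verts d \<Longrightarrow> w @ [a] = nb w a"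
  by (auto simp: nb_def Verts_snoc)

lemma nb_nb: assumes "v \<in> Verts d" shows "nb (nb v a) a = v"
proof (cases "v \<noteq> [] \<and> last v = a")
  case True
  then obtain u where u: "v = u @ [a]" by (metis append_butlast_last_id)
  then have "u = [] \<or> last u \<noteq> a" using assms Verts_snoc by blast
  then show ?thesis using u by (auto simp: nb_def)
next
  case False
  then show ?thesis by (auto simp: nb_def)
qed

lemma length_nb: "length (nb v a) = length v + 1 \<or> length (nb v a) + 1 = length v"
  by (auto simp: nb_def)

lemma even_length_nb: "even (length (nb v a)) \<longleftrightarrow> odd (length v)"
  by (auto simp: nb_def)

lemma nb_neq: "nb v a \<noteq> v"
  using even_length_nb[of v a] by auto

lemma nb_inj: assumes "v \<in> Verts d" and "nb v a = nb v b" shows "a = b"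
  using assms(2)
  by (cases "v \<noteq> [] \<and> last v = a"; cases "v \<noteq> [] \<and> last v = b")
     (auto simp: nb_def dest: arg_cong[where f = length])

lemma ecol_pair: "ecol {w, w @ [a]} = a"
  unfolding ecol_def
proof (rule the_equality)
  fix b assume "\<exists>u. {w, w @ [a]} = {u, u @ [b]}"
  then obtain u where "{w, w @ [a]} = {u, u @ [b]}" by blast
  then show "b = a" by (auto simp: doubleton_eq_iff)
qed blast

lemma ecol_nb: "v \<in> Verts d \<Longrightarrow> ecol {v, nb v a} = a"
proof (cases "v \<noteq> [] \<and> last v = a")
  case True
  then obtain u where "v = u @ [a]" by (metis append_butlast_last_id)
  then show ?thesis using True by (simp add: nb_def insert_commute ecol_pair)
next
  case False
  then show ?thesis by (auto simp: nb_def ecol_pair)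
qed

lemma Edges_iff: "e \<in> Edges d \<longleftrightarrow> (\<exists>v\<in>Verts d. \<exists>a<d. e = {v, nb v a})"
proof
  assume "e \<in> Edges d"
  then obtain w a where "e = {w, w @ [a]}" "w @ [a] \<in> Verts d" by (auto simp: Edges_def)
  then show "\<exists>v\<in>Verts d. \<exists>a<d. e = {v, nb v a}" using Verts_snoc snoc_eq_nb by metis
next
  assume "\<exists>v\<in>Verts d. \<exists>a<d. e = {v, nb v a}"
  then obtain v a where v: "v \<in> Verts d" "a < d" "e = {v, nb v a}" by blast
  show "e \<in> Edges d"
  proof (cases "v \<noteq> [] \<and> last v = a")
    case True
    then obtain u where u: "v = u @ [a]" by (metis append_butlast_last_id)
    then have "e = {u, u @ [a]}" using v True by (auto simp: nb_def)
    then show ?thesis using v u unfolding Edges_def by blast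
  next
    case False
    then have "v @ [a] \<in> Verts d" "e = {v, v @ [a]}" using v Verts_snoc by (auto simp: nb_def)
    then show ?thesis unfolding Edges_def by blast
  qed
qed

lemma Edges_subset_Verts: "e \<in> Edges d \<Longrightarrow> e \<subseteq> Verts d"
  by (auto simp: Edges_iff nb_Verts)

lemma finite_Edges: "e \<in> Edges d \<Longrightarrow> finite e"
  by (auto simp: Edges_iff)

lemma root_edge_Edges: assumes "a < d" shows "{[], [a]} \<in> Edges d"
proof -
  have "[] @ [a] \<in> Verts d" using assms Verts_snoc[of "[]" a d] by (simp add: Verts_def)
  then show ?thesis unfolding Edges_def by blast
qed

lemma edge_eq_nb: assumes "e \<in> Edges d" "u \<in> e" shows "ecol e < d" "e = {u, nb u (ecol e)}"
proof -
  obtain v a where v: "v \<in> Verts d" "a < d" "e = {v, nb v a}" using assms Edges_iff by blast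
  then have "ecol e = a" using ecol_nb by simp
  then show "ecol e < d" "e = {u, nb u (ecol e)}" using assms(2) v nb_nb by auto
qed

lemma doubleton_Edges_iff:
  "v \<in> Verts d \<Longrightarrow> w \<in> Verts d \<Longrightarrow> {v, w} \<in> Edges d \<longleftrightarrow> (\<exists>a<d. w = nb v a)"
proof
  assume "v \<in> Verts d" "w \<in> Verts d" "{v, w} \<in> Edges d"
  then have "{v, w} = {v, nb v (ecol {v, w})}" "ecol {v, w} < d" using edge_eq_nb by blast+
  then show "\<exists>a<d. w = nb v a" using nb_neq[of v "ecol {v, w}"] by (auto simp: doubleton_eq_iff)
next
  assume "v \<in> Verts d" "w \<in> Verts d" "\<exists>a<d. w = nb v a"
  then show "{v, w} \<in> Edges d" unfolding Edges_iff by blast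
qed

lemma Edges_even_vertex: assumes "e \<in> Edges d" shows "\<exists>r\<in>e. even (length r)"
proof -
  obtain v c where "e = {v, nb v c}" using assms Edges_iff by blast
  then show ?thesis using even_length_nb[of v c] by (cases "even (length v)") auto
qed

lemma Verts_connected:
  assumes "u \<in> Verts d" and "P u" and "w \<in> Verts d"
    and step: "\<And>v a. v \<in> Verts d \<Longrightarrow> a < d \<Longrightarrow> P v \<Longrightarrow> P (nb v a)"
  shows "P w"
proof -
  have "P u \<Longrightarrow> P []" using \<open>u \<in> Verts d\<close>
  proof (induction rule: Verts_induct)
    case (snoc u a)
    have "P (nb (u @ [a]) a)" using snoc step Verts_snoc by blast
    then show ?case using snoc(2) by (simp add: nb_snoc_last)
  qed simp
  then have "P []" using \<open>P u\<close> .
  show ?thesis using \<open>w \<in> Verts d\<close>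
  proof (induction rule: Verts_induct)
    case Nil show ?case by fact
  next
    case (snoc w a)
    then have "P (nb w a)" using step Verts_snoc by blast
    then show ?case using snoc_eq_nb[OF snoc(1)] by simp
  qed
qed

lemma aut_Verts: "aut d g \<Longrightarrow> v \<in> Verts d \<Longrightarrow> g v \<in> Verts d"
  by (auto simp: aut_def bij_betw_def)

lemma aut_outside: "aut d g \<Longrightarrow> x \<notin> Verts d \<Longrightarrow> g x = x"
  by (auto simp: aut_def)

lemma aut_inj_on: "aut d g \<Longrightarrow> inj_on g (Verts d)"
  by (auto simp: aut_def bij_betw_def)

lemma aut_inj: assumes "aut d g" shows "inj g"
proof (rule injI)
  fix x y assume e: "g x = g y"
  show "x = y"
  proof (cases "x \<in> Verts d"; cases "y \<in> Verts d")
    assume "x \<in> Verts d" "y \<in> Verts d"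
    then show ?thesis using e aut_inj_on[OF assms] by (auto dest: inj_onD)
  qed (use e aut_Verts[OF assms] aut_outside[OF assms] in metis)+
qed

lemma aut_surj: assumes "aut d g" "u \<in> Verts d" shows "\<exists>v\<in>Verts d. g v = u"
proof -
  have "g ` Verts d = Verts d" using assms(1) by (simp add: aut_def bij_betw_def)
  then show ?thesis using assms(2) by (metis imageE)
qed

lemma aut_edge: assumes "aut d g" "v \<in> Verts d" "w \<in> Verts d"
  shows "{g v, g w} \<in> Edges d \<longleftrightarrow> {v, w} \<in> Edges d"
  using assms by (auto simp: aut_def)

lemma aut_nb: assumes g: "aut d g" and v: "v \<in> Verts d" and a: "a < d"
  shows "locperm d g v a < d" "g (nb v a) = nb (g v) (locperm d g v a)"
proof -
  have "{v, nb v a} \<in> Edges d" using v a by (auto simp: Edges_iff)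
  then have E: "{g v, g (nb v a)} \<in> Edges d" using aut_edge[OF g v nb_Verts[OF v a]] by simp
  have lp: "locperm d g v a = ecol {g v, g (nb v a)}" using a by (simp add: locperm_def)
  show "locperm d g v a < d" using edge_eq_nb(1)[OF E, of "g v"] lp by simp
  have "{g v, g (nb v a)} = {g v, nb (g v) (locperm d g v a)}"
    using edge_eq_nb(2)[OF E, of "g v"] lp by simp
  moreover have "g (nb v a) \<noteq> g v"
    using nb_neq[of v a] aut_inj[OF g] by (auto dest: injD)
  ultimately show "g (nb v a) = nb (g v) (locperm d g v a)"
    by (auto simp: doubleton_eq_iff)
qed

lemma locperm_outside: "d \<le> a \<Longrightarrow> locperm d g v a = a"
  by (simp add: locperm_def)

lemma locperm_fixed:
  assumes g: "aut d g" and v: "v \<in> Verts d" and a: "a < d"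
    and "g v = v" and "g (nb v a) = nb v a"
  shows "locperm d g v a = a"
proof -
  have "nb v (locperm d g v a) = nb v a" using aut_nb(2)[OF g v a] assms(4,5) by simp
  then show ?thesis by (rule nb_inj[OF v])
qed

lemma locperm_permutes: assumes g: "aut d g" and v: "v \<in> Verts d"
  shows "locperm d g v permutes {..<d}"
proof (rule bij_imp_permutes)
  have inj: "inj_on (locperm d g v) {..<d}"
  proof (rule inj_onI)
    fix a b assume "a \<in> {..<d}" "b \<in> {..<d}" "locperm d g v a = locperm d g v b"
    then have "g (nb v a) = g (nb v b)" using aut_nb[OF g v] by simp
    then show "a = b" using aut_inj[OF g] nb_inj[OF v] by (auto dest: injD)
  qed
  have "locperm d g v ` {..<d} \<subseteq> {..<d}" using aut_nb(1)[OF g v] by auto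
  then show "bij_betw (locperm d g v) {..<d} {..<d}"
    using endo_inj_surj[OF _ _ inj] inj by (simp add: bij_betw_def)
qed (simp add: locperm_def)

lemma locperm_cong:
  assumes "g v = h v" "\<And>a. a < d \<Longrightarrow> g (nb v a) = h (nb v a)"
  shows "locperm d g v = locperm d h v"
  using assms by (auto simp: locperm_def fun_eq_iff)

lemma aut_id: "aut d id"
  by (simp add: aut_def)

lemma locperm_id: "v \<in> Verts d \<Longrightarrow> locperm d id v = id"
  by (auto simp: locperm_def fun_eq_iff ecol_nb)

lemma aut_comp: assumes g: "aut d g" and h: "aut d h" shows "aut d (g \<circ> h)"
  unfolding aut_def
proof (intro conjI ballI allI impI)
  show "bij_betw (g \<circ> h) (Verts d) (Verts d)" using g h bij_betw_trans by (auto simp: aut_def)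
  fix x assume "x \<notin> Verts d" then show "(g \<circ> h) x = x" using g h by (auto simp: aut_def)
next
  fix v w assume "v \<in> Verts d" "w \<in> Verts d"
  then show "({(g \<circ> h) v, (g \<circ> h) w} \<in> Edges d) = ({v, w} \<in> Edges d)"
    using aut_edge[OF g] aut_edge[OF h] aut_Verts[OF h] by simp
qed

lemma locperm_comp: assumes g: "aut d g" and h: "aut d h" and v: "v \<in> Verts d"
  shows "locperm d (g \<circ> h) v = locperm d g (h v) \<circ> locperm d h v"
proof
  fix a show "locperm d (g \<circ> h) v a = (locperm d g (h v) \<circ> locperm d h v) a"
  proof (cases "a < d")
    case True
    have hv: "h v \<in> Verts d" using aut_Verts[OF h v] .
    have "(g \<circ> h) (nb v a) = nb ((g \<circ> h) v) (locperm d g (h v) (locperm d h v a))"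
      using aut_nb(2)[OF h v True] aut_nb[OF g hv aut_nb(1)[OF h v True]] by simp
    moreover have "(g \<circ> h) (nb v a) = nb ((g \<circ> h) v) (locperm d (g \<circ> h) v a)"
      using aut_nb(2)[OF aut_comp[OF g h] v True] .
    ultimately show ?thesis using nb_inj aut_Verts[OF g hv] by (metis comp_apply)
  qed (simp add: locperm_def)
qed

definition aut_inv :: "nat \<Rightarrow> (nat list \<Rightarrow> nat list) \<Rightarrow> nat list \<Rightarrow> nat list" where
  "aut_inv d g x = (if x \<in> Verts d then inv_into (Verts d) g x else x)"

lemma aut_inv: assumes g: "aut d g"
  shows "g \<circ> aut_inv d g = id" "aut_inv d g \<circ> g = id" "aut d (aut_inv d g)"
proof -
  have bij: "bij_betw g (Verts d) (Verts d)" using g by (simp add: aut_def)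
  show 1: "g \<circ> aut_inv d g = id"
    using bij aut_outside[OF g] by (auto simp: aut_inv_def bij_betw_inv_into_right)
  show "aut_inv d g \<circ> g = id"
  proof
    fix x show "(aut_inv d g \<circ> g) x = id x"
      using bij aut_Verts[OF g] aut_outside[OF g]
      by (cases "x \<in> Verts d") (simp_all add: aut_inv_def bij_betw_inv_into_left)
  qed
  have iV: "\<And>x. x \<in> Verts d \<Longrightarrow> aut_inv d g x \<in> Verts d"
    using bij by (auto simp: aut_inv_def bij_betw_def inv_into_into)
  show "aut d (aut_inv d g)"
    unfolding aut_def
  proof (intro conjI ballI allI impI)
    show "bij_betw (aut_inv d g) (Verts d) (Verts d)"
      using bij_betw_inv_into[OF bij] by (simp add: aut_inv_def cong: bij_betw_cong)
    fix x assume "x \<notin> Verts d" then show "aut_inv d g x = x" by (simp add: aut_inv_def)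
  next
    fix v w assume v: "v \<in> Verts d" and w: "w \<in> Verts d"
    have "g (aut_inv d g v) = v" "g (aut_inv d g w) = w" using 1 by (metis comp_apply id_apply)+
    then show "({aut_inv d g v, aut_inv d g w} \<in> Edges d) = ({v, w} \<in> Edges d)"
      using aut_edge[OF g iV[OF v] iV[OF w]] by simp
  qed
qed

lemma aut_inv_apply: assumes "aut d g" shows "g (aut_inv d g x) = x" "aut_inv d g (g x) = x"
  using aut_inv[OF assms] by (metis comp_apply id_apply)+

lemma locperm_aut_inv: assumes g: "aut d g" and u: "u \<in> Verts d"
  shows "locperm d (aut_inv d g) u = inv (locperm d g (aut_inv d g u))"
proof -
  have gi: "aut d (aut_inv d g)" using aut_inv(3)[OF g] .
  have e: "locperm d g (aut_inv d g u) \<circ> locperm d (aut_inv d g) u = id"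
    using locperm_comp[OF g gi u] locperm_id[OF u] aut_inv(1)[OF g] by simp
  have p: "locperm d g (aut_inv d g u) permutes {..<d}"
    using locperm_permutes[OF g aut_Verts[OF gi u]] .
  show ?thesis
  proof
    fix a
    have "locperm d g (aut_inv d g u) (locperm d (aut_inv d g) u a) = a"
      using e by (metis comp_apply id_apply)
    then show "locperm d (aut_inv d g) u a = inv (locperm d g (aut_inv d g u)) a"
      using permutes_inverses(2)[OF p] by metis
  qed
qed

lemma autI:
  assumes bij: "bij_betw g (Verts d) (Verts d)" and outside: "\<And>x. x \<notin> Verts d \<Longrightarrow> g x = x"
    and nb: "\<And>v a. v \<in> Verts d \<Longrightarrow> a < d \<Longrightarrow> g (nb v a) = nb (g v) (p v a)"
    and p: "\<And>v. v \<in> Verts d \<Longrightarrow> p v ` {..<d} = {..<d}"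
  shows "aut d g"
  unfolding aut_def
proof (intro conjI ballI allI impI bij outside)
  fix v w assume v: "v \<in> Verts d" and w: "w \<in> Verts d"
  have gv: "g v \<in> Verts d" "g w \<in> Verts d" using bij v w by (auto simp: bij_betw_def)
  show "({g v, g w} \<in> Edges d) = ({v, w} \<in> Edges d)"
  proof
    assume "{g v, g w} \<in> Edges d"
    then obtain b where b: "b < d" "g w = nb (g v) b" using doubleton_Edges_iff gv by blast
    then obtain a where a: "a < d" "p v a = b" using p[OF v] by (metis imageE lessThan_iff)
    then have "g (nb v a) = g w" using nb[OF v a(1)] b by simp
    then have "nb v a = w" using bij nb_Verts[OF v a(1)] w by (auto simp: bij_betw_def dest: inj_onD)
    then show "{v, w} \<in> Edges d" using doubleton_Edges_iff[OF v w] a by blast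
  next
    assume "{v, w} \<in> Edges d"
    then obtain a where a: "a < d" "w = nb v a" using doubleton_Edges_iff v w by blast
    then show "{g v, g w} \<in> Edges d" using nb[OF v] p[OF v] doubleton_Edges_iff gv by blast
  qed
qed

lemma aut_image_Edges: assumes g: "aut d g" and e: "e \<in> Edges d" shows "g ` e \<in> Edges d"
proof -
  obtain v a where v: "v \<in> Verts d" "a < d" "e = {v, nb v a}" using e Edges_iff by blast
  then have "g ` e = {g v, nb (g v) (locperm d g v a)}" using aut_nb[OF g v(1,2)] by simp
  then show ?thesis using aut_nb(1)[OF g v(1,2)] aut_Verts[OF g v(1)] Edges_iff by blast
qed

lemma aut_length_le: assumes g: "aut d g" and v: "v \<in> Verts d" and w: "w \<in> Verts d"
  shows "length (g w) \<le> length (g v) + length v + length w"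
proof -
  have "length (g w) \<le> length (g []) + length w \<and> length (g []) \<le> length (g w) + length w"
    if "w \<in> Verts d" for w
    using that
  proof (induction rule: Verts_induct)
    case (snoc w a)
    have "g (w @ [a]) = nb (g w) (locperm d g w a)"
      using snoc_eq_nb[OF snoc(1)] aut_nb(2)[OF g] snoc(1) Verts_snoc by metis
    then show ?case using snoc(2) length_nb[of "g w" "locperm d g w a"] by auto
  qed simp
  from this[OF v] this[OF w] show ?thesis by linarith
qed

lemma aut_eq_id_by_propagation:
  assumes g: "aut d g" and u: "u \<in> Verts d" "g u = u" "locperm d g u = id"
    and rigid: "\<And>w c. w \<in> Verts d \<Longrightarrow> g w = w \<Longrightarrow> c < d \<Longrightarrow> locperm d g w c = c \<Longrightarrow> locperm d g w = id"
  shows "g = id"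
proof -
  have "g w = w \<and> locperm d g w = id" if "w \<in> Verts d" for w
    using u(1) _ that
  proof (rule Verts_connected[where P = "\<lambda>w. g w = w \<and> locperm d g w = id"])
    show "g u = u \<and> locperm d g u = id" using u by simp
    fix v a assume v: "v \<in> Verts d" and a: "a < d" and "g v = v \<and> locperm d g v = id"
    then have gnb: "g (nb v a) = nb v a" using aut_nb(2)[OF g v a] by simp
    have "g (nb (nb v a) a) = nb (nb v a) a" using nb_nb[OF v] \<open>g v = v \<and> _\<close> by simp
    then have "locperm d g (nb v a) a = a" using locperm_fixed[OF g nb_Verts[OF v a] a gnb] by simp
    then show "g (nb v a) = nb v a \<and> locperm d g (nb v a) = id"
      using rigid[OF nb_Verts[OF v a] gnb a] gnb by simp
  qed
  then show ?thesis using aut_outside[OF g] by (auto simp: fun_eq_iff)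
qed

text \<open>The vertices form the free product of d copies of Z/2; word_mult r v is the endpoint of the
  path from r whose edges are coloured by the letters of v.\<close>

definition word_mult :: "nat list \<Rightarrow> nat list \<Rightarrow> nat list" where
  "word_mult r v = foldl nb r v"

definition on_Verts :: "nat \<Rightarrow> (nat list \<Rightarrow> nat list) \<Rightarrow> nat list \<Rightarrow> nat list" where
  "on_Verts d R x = (if x \<in> Verts d then R x else x)"

lemma word_mult_snoc: "word_mult r (v @ [a]) = nb (word_mult r v) a"
  by (simp add: word_mult_def)

lemma word_mult_Nil_right[simp]: "word_mult r [] = r"
  by (simp add: word_mult_def)

lemma word_mult_Verts: assumes r: "r \<in> Verts d" and v: "v \<in> Verts d" shows "word_mult r v \<in> Verts d"
  using v
proof (induction rule: Verts_induct)
  case (snoc w a)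
  then show ?case using nb_Verts Verts_snoc word_mult_snoc by metis
qed (simp add: r)

lemma word_mult_nb: assumes x: "x \<in> Verts d" and u: "u \<in> Verts d"
  shows "word_mult x (nb u a) = nb (word_mult x u) a"
proof (cases "u \<noteq> [] \<and> last u = a")
  case True
  then obtain u0 where uu: "u = u0 @ [a]" by (metis append_butlast_last_id)
  have u0: "u0 \<in> Verts d" using Verts_butlast[OF u] uu by simp
  have "nb u a = u0" unfolding uu by (rule nb_snoc_last)
  moreover have "word_mult x u = nb (word_mult x u0) a" unfolding uu by (rule word_mult_snoc)
  ultimately show ?thesis using nb_nb word_mult_Verts[OF x u0] by metis
next
  case False
  then have "nb u a = u @ [a]" unfolding nb_def by (rule if_not_P)
  then show ?thesis by (simp add: word_mult_snoc)
qed

lemma word_mult_assoc: assumes x: "x \<in> Verts d" and y: "y \<in> Verts d" and v: "v \<in> Verts d"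
  shows "word_mult x (word_mult y v) = word_mult (word_mult x y) v"
  using v
proof (induction rule: Verts_induct)
  case (snoc w a)
  have "w \<in> Verts d" using snoc(1) Verts_snoc by blast
  then show ?case
    using snoc(2) word_mult_nb[OF x word_mult_Verts[OF y]] by (simp add: word_mult_snoc)
qed simp

lemma word_mult_Nil_left: assumes v: "v \<in> Verts d" shows "word_mult [] v = v"
  using v
proof (induction rule: Verts_induct)
  case (snoc w a)
  have "word_mult [] (w @ [a]) = nb w a" using snoc(2) by (simp add: word_mult_snoc)
  then show ?case using snoc_eq_nb[OF snoc(1)] by simp
qed simp

lemma word_mult_rev_self: "word_mult (rev r) r = []"
proof (induction r)
  case (Cons a r)
  then show ?case by (simp add: word_mult_def nb_snoc_last)
qed simp

lemma aut_word_mult: assumes r: "r \<in> Verts d" shows "aut d (on_Verts d (word_mult r))"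
proof (rule autI[where p = "\<lambda>v a. a"])
  have rr: "rev r \<in> Verts d" using rev_Verts[OF r] .
  have "word_mult (rev r) (word_mult r v) = v" "word_mult r (word_mult (rev r) v) = v"
    if "v \<in> Verts d" for v
    using word_mult_assoc[OF rr r that] word_mult_assoc[OF r rr that] word_mult_rev_self[of r]
      word_mult_rev_self[of "rev r"] word_mult_Nil_left[OF that] by simp_all
  then show "bij_betw (on_Verts d (word_mult r)) (Verts d) (Verts d)"
    using word_mult_Verts[OF r] word_mult_Verts[OF rr]
    by (intro bij_betw_byWitness[where f' = "word_mult (rev r)"]) (auto simp: on_Verts_def)
qed (auto simp: on_Verts_def word_mult_nb[OF r] nb_Verts)

lemma locperm_word_mult: assumes r: "r \<in> Verts d" and v: "v \<in> Verts d"
  shows "locperm d (on_Verts d (word_mult r)) v = id"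
proof
  fix a show "locperm d (on_Verts d (word_mult r)) v a = id a"
  proof (cases "a < d")
    case True
    then have "on_Verts d (word_mult r) (nb v a) = nb (on_Verts d (word_mult r) v) a"
      using word_mult_nb[OF r v] nb_Verts[OF v] v by (simp add: on_Verts_def)
    then show ?thesis
      using aut_nb(2)[OF aut_word_mult[OF r] v True] nb_inj aut_Verts[OF aut_word_mult[OF r] v]
      by (metis id_apply)
  qed (simp add: locperm_def)
qed

lemma even_length_word_mult: "even (length (word_mult r v)) \<longleftrightarrow> even (length r + length v)"
proof (induction v rule: rev_induct)
  case (snoc a v)
  then show ?case using even_length_nb[of "word_mult r v" a] by (simp add: word_mult_snoc)
qed simp

section \<open>Automorphisms with prescribed local permutations\<close>

text \<open>A root-fixing automorphism is determined by its local permutations P w; it maps w @ [a] to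
  R w @ [P w a]. The condition on P says that the local permutations at the two ends of an edge
  agree on the colour of that edge, which is what the construction needs to be an automorphism.\<close>

locale prescribed_locperm =
  fixes d :: nat and R :: "nat list \<Rightarrow> nat list" and P :: "nat list \<Rightarrow> nat \<Rightarrow> nat"
  assumes R_Nil: "R [] = []"
    and R_snoc: "\<And>w a. w @ [a] \<in> Verts d \<Longrightarrow> R (w @ [a]) = R w @ [P w a]"
    and P_surj: "\<And>w. w \<in> Verts d \<Longrightarrow> P w ` {..<d} = {..<d}"
    and P_snoc: "\<And>w a. w @ [a] \<in> Verts d \<Longrightarrow> P (w @ [a]) a = P w a"
begin

lemma P_inj: "w \<in> Verts d \<Longrightarrow> inj_on (P w) {..<d}"
  using finite_surj_inj[of "{..<d}" "P w"] P_surj by simp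

lemma last_R_neq:
  assumes w: "w \<in> Verts d" and a: "a < d" and ne: "w \<noteq> [] \<longrightarrow> last w \<noteq> a"
    and last_R: "w \<noteq> [] \<longrightarrow> last (R w) = P w (last w)" and len: "length (R w) = length w"
  shows "R w \<noteq> [] \<longrightarrow> last (R w) \<noteq> P w a"
proof
  assume "R w \<noteq> []"
  then have "w \<noteq> []" using len by auto
  then have "last (R w) = P w (last w)" "last w \<noteq> a" "last w < d"
    using last_R ne last_Verts_less[OF w] by auto
  then show "last (R w) \<noteq> P w a" using P_inj[OF w] a by (auto dest: inj_onD)
qed

lemma R_props:
  "w \<in> Verts d \<Longrightarrow> R w \<in> Verts d \<and> length (R w) = length w \<and> (w \<noteq> [] \<longrightarrow> last (R w) = P w (last w))"
proof (induction rule: Verts_induct)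
  case (snoc w a)
  have w: "w \<in> Verts d" "a < d" "w \<noteq> [] \<longrightarrow> last w \<noteq> a" using snoc(1) Verts_snoc by blast+
  then have "R w @ [P w a] \<in> Verts d"
    using snoc(2) last_R_neq[OF w] P_surj[OF w(1)] Verts_snoc by blast
  then show ?case using R_snoc[OF snoc(1)] snoc(2) P_snoc[OF snoc(1)] by simp
qed (simp add: R_Nil)

lemma R_nb: assumes w: "w \<in> Verts d" and a: "a < d"
  shows "on_Verts d R (nb w a) = nb (on_Verts d R w) (P w a)"
proof (cases "w \<noteq> [] \<and> last w = a")
  case True
  then obtain w0 where ww: "w = w0 @ [a]" by (metis append_butlast_last_id)
  have w0: "w0 \<in> Verts d" using Verts_butlast[OF w] ww by simp
  show ?thesis
    using R_snoc[of w0 a] P_snoc[of w0 a] w w0 by (simp add: ww on_Verts_def nb_snoc_last)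
next
  case False
  then have n: "nb w a = w @ [a]" unfolding nb_def by (rule if_not_P)
  have wa: "w @ [a] \<in> Verts d" using False w a Verts_snoc by blast
  have "R w \<noteq> [] \<longrightarrow> last (R w) \<noteq> P w a"
    using last_R_neq[OF w a] False R_props[OF w] by blast
  then have "nb (R w) (P w a) = R w @ [P w a]" unfolding nb_def by auto
  then show ?thesis using n wa w R_snoc[OF wa] by (simp add: on_Verts_def)
qed

lemma R_inj: "v \<in> Verts d \<Longrightarrow> w \<in> Verts d \<Longrightarrow> R v = R w \<Longrightarrow> v = w"
proof (induction v arbitrary: w rule: Verts_induct)
  case Nil
  then show ?case using R_props R_Nil by (metis length_0_conv)
next
  case (snoc v a)
  have v: "v \<in> Verts d" "a < d" using snoc(1) Verts_snoc by blast+
  have "length w = Suc (length v)" using R_props[OF snoc(1)] R_props[OF snoc(3)] snoc(4) by simp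
  then obtain w0 b where wb: "w = w0 @ [b]" by (metis length_Suc_conv_rev)
  have w0: "w0 \<in> Verts d" "b < d" using snoc(3) Verts_snoc unfolding wb by blast+
  have "R v @ [P v a] = R w0 @ [P w0 b]" using snoc(4) R_snoc snoc(1) snoc(3) unfolding wb by metis
  then have "v = w0" "P v a = P w0 b" using snoc(2)[OF w0(1)] by simp_all
  then show ?case using P_inj[OF v(1)] v(2) w0(2) wb by (auto dest: inj_onD)
qed

lemma R_surj: "u \<in> Verts d \<Longrightarrow> \<exists>w\<in>Verts d. R w = u"
proof (induction rule: Verts_induct)
  case Nil then show ?case using R_Nil by auto
next
  case (snoc u c)
  obtain w0 where w0: "w0 \<in> Verts d" "R w0 = u" using snoc(2) by blast
  have c: "c < d" "u \<noteq> [] \<longrightarrow> last u \<noteq> c" using snoc(1) Verts_snoc by blast+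
  obtain a where a: "a < d" "P w0 a = c" using P_surj[OF w0(1)] c(1) by (metis imageE lessThan_iff)
  have "w0 \<noteq> [] \<longrightarrow> last w0 \<noteq> a" using R_props[OF w0(1)] w0(2) c a by auto
  then have wa: "w0 @ [a] \<in> Verts d" using w0(1) a(1) Verts_snoc by blast
  then show ?case using R_snoc w0 a by force
qed

lemma aut_on_Verts: "aut d (on_Verts d R)"
proof (rule autI[where p = P])
  show "bij_betw (on_Verts d R) (Verts d) (Verts d)"
    using R_inj R_surj R_props by (fastforce simp: bij_betw_def inj_on_def on_Verts_def image_iff)
qed (use R_nb P_surj in \<open>auto simp: on_Verts_def\<close>)

lemma locperm_on_Verts: assumes v: "v \<in> Verts d" and a: "a < d"
  shows "locperm d (on_Verts d R) v a = P v a"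
  using aut_nb(2)[OF aut_on_Verts v a] R_nb[OF v a] nb_inj aut_Verts[OF aut_on_Verts v] by metis

end

definition coset_mult :: "(nat \<Rightarrow> nat) \<Rightarrow> (nat \<Rightarrow> nat) set \<Rightarrow> (nat \<Rightarrow> nat) set" where
  "coset_mult g S = (\<lambda>h. g \<circ> h) ` S"

lemma coset_mult_comp: "coset_mult g (coset_mult h S) = coset_mult (g \<circ> h) S"
  by (auto simp: coset_mult_def image_image comp_assoc)

lemma coset_mult_id: "coset_mult id S = S"
  by (simp add: coset_mult_def)

lemma mem_coset_mult_self: "id \<in> S \<Longrightarrow> c \<in> coset_mult c S"
  unfolding coset_mult_def by (rule image_eqI[where x = id]) simp_all

locale perm_group_on =
  fixes d :: nat and F :: "(nat \<Rightarrow> nat) set"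
  assumes perm_group: "perm_group d F"
begin

lemma permutes: "p \<in> F \<Longrightarrow> p permutes {..<d}"
  using perm_group by (auto simp: perm_group_def)

lemma id_mem: "id \<in> F"
  using perm_group by (auto simp: perm_group_def)

lemma comp_mem: "p \<in> F \<Longrightarrow> q \<in> F \<Longrightarrow> p \<circ> q \<in> F"
  using perm_group by (auto simp: perm_group_def)

lemma inv_mem: "p \<in> F \<Longrightarrow> inv p \<in> F"
  using perm_group by (auto simp: perm_group_def)

lemma coset_mult_mem: assumes q: "q \<in> F" shows "coset_mult q F = F"
proof
  show "coset_mult q F \<subseteq> F" using comp_mem q by (auto simp: coset_mult_def)
  show "F \<subseteq> coset_mult q F"
  proof
    fix h assume h: "h \<in> F"
    have "h = q \<circ> (inv q \<circ> h)" using permutes_inv_o(1)[OF permutes[OF q]] by (simp add: o_assoc)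
    then show "h \<in> coset_mult q F" using comp_mem inv_mem q h by (auto simp: coset_mult_def)
  qed
qed

end

locale GFF_action =
  fixes d n :: nat and F F' :: "(nat \<Rightarrow> nat) set" and \<beta> :: "nat \<Rightarrow> (nat \<Rightarrow> nat) set"
  assumes d3: "d \<ge> 3"
    and F: "perm_group d F" and F': "perm_group d F'" and FF': "F \<subseteq> F'"
    and orb: "preserves_orbits d F F'"
    and n: "n = card (lcosets F' F)"
    and \<beta>: "bij_betw \<beta> {..<n} (lcosets F' F)" and \<beta>0: "\<beta> 0 = F"
begin

sublocale F: perm_group_on d F using F by unfold_locales
sublocale F': perm_group_on d F' using F' by unfold_locales

lemma n_pos: "0 < n"
proof -
  have "F = (\<lambda>h. id \<circ> h) ` F" by simp
  then have "F \<in> lcosets F' F" unfolding lcosets_def using F'.id_mem by blast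
  then show ?thesis using \<beta> by (auto simp: bij_betw_def)
qed

lemma coset_repr: assumes "i < n" obtains c where "c \<in> F'" "\<beta> i = coset_mult c F"
proof -
  have "\<beta> i \<in> lcosets F' F" using \<beta> assms by (auto simp: bij_betw_def)
  then show ?thesis using that by (auto simp: lcosets_def coset_mult_def)
qed

lemma coset_subset: assumes "i < n" shows "\<beta> i \<subseteq> F'"
proof -
  obtain c where "c \<in> F'" "\<beta> i = coset_mult c F" using coset_repr[OF assms] .
  then show ?thesis using F'.comp_mem FF' by (auto simp: coset_mult_def)
qed

lemma coset_nonempty: assumes "i < n" obtains p where "p \<in> \<beta> i"
  using F.id_mem mem_coset_mult_self by (metis coset_repr[OF assms])

lemma coset_mult_member: assumes i: "i < n" and p: "p \<in> \<beta> i" shows "coset_mult p F = \<beta> i"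
proof -
  obtain c where c: "c \<in> F'" "\<beta> i = coset_mult c F" using coset_repr[OF i] .
  then obtain q where q: "q \<in> F" "p = c \<circ> q" using p by (auto simp: coset_mult_def)
  then show ?thesis using F.coset_mult_mem[OF q(1)] c coset_mult_comp by metis
qed

lemma \<beta>_inj: "i < n \<Longrightarrow> j < n \<Longrightarrow> \<beta> i = \<beta> j \<Longrightarrow> i = j"
  using \<beta> by (auto simp: bij_betw_def dest: inj_onD)

lemma alpha: assumes g: "g \<in> F'" and i: "i < n"
  shows "alpha \<beta> n g i < n" "\<beta> (alpha \<beta> n g i) = coset_mult g (\<beta> i)"
proof -
  obtain c where c: "c \<in> F'" "\<beta> i = coset_mult c F" using coset_repr[OF i] .
  have "coset_mult g (\<beta> i) = coset_mult (g \<circ> c) F" using c by (simp add: coset_mult_comp)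
  then have X: "coset_mult g (\<beta> i) \<in> \<beta> ` {..<n}" using \<beta> F'.comp_mem[OF g c(1)]
    by (auto simp: bij_betw_def lcosets_def coset_mult_def)
  have inj: "inj_on \<beta> {..<n}" using \<beta> by (simp add: bij_betw_def)
  show "alpha \<beta> n g i < n" "\<beta> (alpha \<beta> n g i) = coset_mult g (\<beta> i)"
    using the_inv_into_into[OF inj X, of "{..<n}"] f_the_inv_into_f[OF inj X]
    by (simp_all add: alpha_def coset_mult_def)
qed

lemma alpha_eqI: assumes "g \<in> F'" "i < n" "j < n" "\<beta> j = coset_mult g (\<beta> i)"
  shows "alpha \<beta> n g i = j"
  using alpha[OF assms(1,2)] \<beta>_inj assms(3,4) by metis

lemma alpha_comp: assumes g: "g \<in> F'" and h: "h \<in> F'" and i: "i < n"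
  shows "alpha \<beta> n (g \<circ> h) i = alpha \<beta> n g (alpha \<beta> n h i)"
proof (rule alpha_eqI[OF F'.comp_mem[OF g h] i])
  show "alpha \<beta> n g (alpha \<beta> n h i) < n" using alpha(1)[OF g alpha(1)[OF h i]] .
  show "\<beta> (alpha \<beta> n g (alpha \<beta> n h i)) = coset_mult (g \<circ> h) (\<beta> i)"
    using alpha[OF h i] alpha(2)[OF g alpha(1)[OF h i]] by (simp add: coset_mult_comp)
qed

lemma alpha_id: "i < n \<Longrightarrow> alpha \<beta> n id i = i"
  using alpha_eqI[OF F'.id_mem] coset_mult_id by simp

lemma alpha_zero_member: "p \<in> F' \<Longrightarrow> i < n \<Longrightarrow> p \<in> \<beta> i \<Longrightarrow> alpha \<beta> n p 0 = i"
  using alpha_eqI[OF _ n_pos] coset_mult_member \<beta>0 by simp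

lemma alpha_zero_iff: assumes p: "p \<in> F'" shows "alpha \<beta> n p 0 = 0 \<longleftrightarrow> p \<in> F"
proof
  assume "alpha \<beta> n p 0 = 0"
  then have "F = coset_mult p F" using alpha(2)[OF p n_pos] \<beta>0 by simp
  then show "p \<in> F" using F.id_mem mem_coset_mult_self by metis
qed (use alpha_zero_member[OF p n_pos] \<beta>0 in simp)

text \<open>This is where orbit preservation enters: every coset of F contains an element that moves a
  given colour like a given element of F'.\<close>

lemma coset_point: assumes i: "i < n" and p: "p \<in> F'" and a: "a < d"
  obtains q where "q \<in> \<beta> i" "q a = p a"
proof -
  obtain c where c: "c \<in> F'" "\<beta> i = coset_mult c F" using coset_repr[OF i] .
  have "inv c \<circ> p \<in> F'" using F'.comp_mem F'.inv_mem c(1) p by blast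
  then obtain q where q: "q \<in> F" "q a = (inv c \<circ> p) a" using orb a unfolding preserves_orbits_def by blast
  have "(c \<circ> q) a = p a" using q permutes_inverses(1)[OF F'.permutes[OF c(1)]] by simp
  moreover have "c \<circ> q \<in> \<beta> i" using c q by (auto simp: coset_mult_def)
  ultimately show ?thesis using that by blast
qed

lemma coset_point_transitive: assumes i: "i < n" and tr: "transitive_on d F" and a: "a < d" and b: "b < d"
  obtains q where "q \<in> \<beta> i" "q a = b"
proof -
  obtain c where c: "c \<in> F'" "\<beta> i = coset_mult c F" using coset_repr[OF i] .
  have "inv c b < d" using permutes_in_image[OF F'.permutes[OF F'.inv_mem[OF c(1)]]] b by simp
  then obtain q where q: "q \<in> F" "q a = inv c b" using tr a by (auto simp: transitive_on_def)
  have "(c \<circ> q) a = b" using q permutes_inverses(1)[OF F'.permutes[OF c(1)]] by simp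
  moreover have "c \<circ> q \<in> \<beta> i" using c q by (auto simp: coset_mult_def)
  ultimately show ?thesis using that by blast
qed

text \<open>If F is semiregular, an element of F' stabilising a coset gF and fixing a point is trivial:
  it is conjugate under g to an element of F with a fixed point.\<close>

lemma semiregular_coset_stabilizer:
  assumes sr: "semiregular_on d F" and s: "s \<in> F'" and i: "i < n"
    and st: "coset_mult s (\<beta> i) = \<beta> i" and c: "c < d" and sc: "s c = c"
  shows "s = id"
proof -
  obtain g where g: "g \<in> F'" "\<beta> i = coset_mult g F" using coset_repr[OF i] .
  then have "s \<circ> g \<in> \<beta> i" using st F.id_mem mem_coset_mult_self by (auto simp: coset_mult_def)
  then obtain q where q: "q \<in> F" "s \<circ> g = g \<circ> q" using g by (auto simp: coset_mult_def)
  have gp: "g permutes {..<d}" using F'.permutes[OF g(1)] .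
  define x where "x = inv g c"
  have x: "x < d" "g x = c" using permutes_in_image[OF permutes_inv[OF gp]] c
      permutes_inverses(1)[OF gp] unfolding x_def by auto
  have "g (q x) = g x" using q(2) x sc by (metis comp_apply)
  then have "q x = x" using permutes_inj[OF gp] by (auto dest: injD)
  then have "q = id" using sr q(1) x(1) by (auto simp: semiregular_on_def)
  then have "s \<circ> g \<circ> inv g = g \<circ> inv g" using q by simp
  then show "s = id" using permutes_inv_o(1)[OF gp] by (simp add: comp_assoc)
qed

definition singular :: "(nat list \<Rightarrow> nat list) \<Rightarrow> nat list set" where
  "singular g = {v \<in> Verts d. locperm d g v \<notin> F}"

lemma GFF_aut: "g \<in> GFF d F F' \<Longrightarrow> aut d g"
  by (simp add: GFF_def)

lemma locperm_GFF: "g \<in> GFF d F F' \<Longrightarrow> v \<in> Verts d \<Longrightarrow> locperm d g v \<in> F'"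
  by (simp add: GFF_def)

lemma finite_singular: "g \<in> GFF d F F' \<Longrightarrow> finite (singular g)"
  by (simp add: GFF_def singular_def)

lemma GFF_iff:
  "g \<in> GFF d F F' \<longleftrightarrow> aut d g \<and> (\<forall>v\<in>Verts d. locperm d g v \<in> F') \<and> finite (singular g)"
  by (simp add: GFF_def singular_def)

lemma GFF_comp: assumes g: "g \<in> GFF d F F'" and h: "h \<in> GFF d F F'" shows "g \<circ> h \<in> GFF d F F'"
proof -
  have ag: "aut d g" and ah: "aut d h" using g h GFF_aut by blast+
  have lp: "\<And>v. v \<in> Verts d \<Longrightarrow> locperm d (g \<circ> h) v = locperm d g (h v) \<circ> locperm d h v"
    using locperm_comp[OF ag ah] .
  have "singular (g \<circ> h) \<subseteq> singular h \<union> h -` singular g"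
    using lp F.comp_mem aut_Verts[OF ah] by (auto simp: singular_def)
  then have "finite (singular (g \<circ> h))"
    using finite_singular[OF h] finite_vimageI[OF finite_singular[OF g] aut_inj[OF ah]]
    by (meson finite_UnI finite_subset)
  then show ?thesis
    using lp F'.comp_mem locperm_GFF[OF g] locperm_GFF[OF h] aut_Verts[OF ah] aut_comp[OF ag ah]
    by (simp add: GFF_iff)
qed

lemma GFF_aut_inv: assumes g: "g \<in> GFF d F F'" shows "aut_inv d g \<in> GFF d F F'"
proof -
  have ag: "aut d g" using GFF_aut[OF g] .
  have gi: "aut d (aut_inv d g)" using aut_inv(3)[OF ag] .
  have lp: "\<And>u. u \<in> Verts d \<Longrightarrow> locperm d (aut_inv d g) u = inv (locperm d g (aut_inv d g u))"
    using locperm_aut_inv[OF ag] .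
  have "singular (aut_inv d g) \<subseteq> aut_inv d g -` singular g"
    using lp F.inv_mem aut_Verts[OF gi] inv_inv_eq[OF permutes_bij[OF locperm_permutes[OF ag]]]
    by (fastforce simp: singular_def)
  then have "finite (singular (aut_inv d g))"
    using finite_vimageI[OF finite_singular[OF g] aut_inj[OF gi]] finite_subset by blast
  then show ?thesis
    using lp F'.inv_mem locperm_GFF[OF g] aut_Verts[OF gi] gi by (simp add: GFF_iff)
qed

lemma UF_subset_GFF: "UF d F \<subseteq> GFF d F F'"
proof
  fix g assume g: "g \<in> UF d F"
  then have "singular g = {}" by (auto simp: UF_def singular_def)
  then show "g \<in> GFF d F F'" using g FF' by (auto simp: UF_def GFF_iff)
qed

lemma id_UF: "id \<in> UF d F"
  using aut_id locperm_id F.id_mem by (simp add: UF_def)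

lemma GFFstar_GFF: "g \<in> GFFstar d F F' \<Longrightarrow> g \<in> GFF d F F'"
  by (simp add: GFFstar_def)

lemma GFFstar_comp:
  "g \<in> GFFstar d F F' \<Longrightarrow> h \<in> GFFstar d F F' \<Longrightarrow> g \<circ> h \<in> GFFstar d F F'"
  using GFF_comp aut_Verts GFF_aut by (simp add: GFFstar_def)

lemma GFFstar_aut_inv: assumes g: "g \<in> GFFstar d F F'" shows "aut_inv d g \<in> GFFstar d F F'"
proof -
  have ag: "aut d g" using g GFF_aut by (simp add: GFFstar_def)
  have "even (length (aut_inv d g v)) = even (length v)" if v: "v \<in> Verts d" for v
    using g aut_Verts[OF aut_inv(3)[OF ag] v] aut_inv_apply(1)[OF ag, of v]
    by (simp add: GFFstar_def) metis
  then show ?thesis using GFF_aut_inv GFFstar_GFF[OF g] by (simp add: GFFstar_def)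
qed

end

context GFF_action
begin

lemma fst_act_outside: "v \<notin> Verts d \<Longrightarrow> fst (act d \<beta> n g x) v = 0"
  by (simp add: act_def)

lemma snd_act: "snd (act d \<beta> n g x) = g ` snd x"
  by (simp add: act_def)

lemma fst_act_apply: assumes g: "aut d g" and u: "u \<in> Verts d"
  shows "fst (act d \<beta> n g x) (g u) = alpha \<beta> n (locperm d g u) (fst x u)"
  using inv_into_f_f[OF aut_inj_on[OF g] u] aut_Verts[OF g u] by (simp add: act_def)

lemma act_eq_iff: assumes g: "aut d g" and fy: "\<forall>v. v \<notin> Verts d \<longrightarrow> fy v = 0"
  shows "act d \<beta> n g (fx, ex) = (fy, ey) \<longleftrightarrow>
         (\<forall>w\<in>Verts d. fy (g w) = alpha \<beta> n (locperm d g w) (fx w)) \<and> g ` ex = ey"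
proof
  assume h: "act d \<beta> n g (fx, ex) = (fy, ey)"
  then show "(\<forall>w\<in>Verts d. fy (g w) = alpha \<beta> n (locperm d g w) (fx w)) \<and> g ` ex = ey"
    using fst_act_apply[OF g, of _ "(fx, ex)"] snd_act[of g "(fx, ex)"] by simp
next
  assume h: "(\<forall>w\<in>Verts d. fy (g w) = alpha \<beta> n (locperm d g w) (fx w)) \<and> g ` ex = ey"
  have "fst (act d \<beta> n g (fx, ex)) = fy"
  proof
    fix v show "fst (act d \<beta> n g (fx, ex)) v = fy v"
    proof (cases "v \<in> Verts d")
      case True
      then obtain w where w: "w \<in> Verts d" "g w = v" using aut_surj[OF g] by blast
      then show ?thesis using fst_act_apply[OF g w(1), of "(fx, ex)"] h by auto
    qed (simp add: fst_act_outside fy)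
  qed
  moreover have "snd (act d \<beta> n g (fx, ex)) = ey" using snd_act h by simp
  ultimately show "act d \<beta> n g (fx, ex) = (fy, ey)" by (metis prod.collapse)
qed

lemma support_act_subset: assumes g: "g \<in> GFF d F F'" and f: "\<forall>v. f v < n"
  shows "{v. fst (act d \<beta> n g (f, e)) v \<noteq> 0} \<subseteq> g ` ({w. f w \<noteq> 0} \<union> singular g)"
proof
  fix v assume v: "v \<in> {v. fst (act d \<beta> n g (f, e)) v \<noteq> 0}"
  have "v \<in> Verts d"
  proof (rule ccontr)
    assume "v \<notin> Verts d"
    then show False using v fst_act_outside[of v g "(f, e)"] by simp
  qed
  then obtain w where w: "w \<in> Verts d" "g w = v" using aut_surj[OF GFF_aut[OF g]] by blast
  have "alpha \<beta> n (locperm d g w) (f w) \<noteq> 0"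
    using v w fst_act_apply[OF GFF_aut[OF g] w(1), of "(f, e)"] by simp
  then have "f w \<noteq> 0 \<or> w \<in> singular g"
    using alpha_zero_iff[OF locperm_GFF[OF g w(1)]] w(1) by (auto simp: singular_def)
  then show "v \<in> g ` ({w. f w \<noteq> 0} \<union> singular g)" using w(2) by blast
qed

lemma act_Xverts: assumes g: "g \<in> GFF d F F'" and x: "x \<in> Xverts n d"
  shows "act d \<beta> n g x \<in> Xverts n d"
proof -
  obtain f e where fe: "x = (f, e)" and f: "\<forall>v. f v < n" "finite {v. f v \<noteq> 0}" "e \<in> Edges d"
    using x by (auto simp: Xverts_def)
  have ag: "aut d g" using GFF_aut[OF g] .
  have "fst (act d \<beta> n g x) v < n" for v
  proof (cases "v \<in> Verts d")
    case True
    then obtain w where w: "w \<in> Verts d" "g w = v" using aut_surj[OF ag] by blast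
    then show ?thesis
      using fst_act_apply[OF ag w(1), of x] alpha(1)[OF locperm_GFF[OF g w(1)]] f(1) fe by simp
  qed (simp add: fst_act_outside n_pos)
  moreover have "finite {v. fst (act d \<beta> n g x) v \<noteq> 0}"
    using support_act_subset[OF g f(1)] f(2) finite_singular[OF g] fe by (meson finite_UnI finite_imageI finite_subset)
  moreover have "snd (act d \<beta> n g x) \<in> Edges d" using snd_act aut_image_Edges[OF ag f(3)] fe by simp
  ultimately show ?thesis using fst_act_outside by (simp add: Xverts_def case_prod_unfold)
qed

lemma act_comp: assumes g: "g \<in> GFF d F F'" and h: "h \<in> GFF d F F'" and x: "x \<in> Xverts n d"
  shows "act d \<beta> n (g \<circ> h) x = act d \<beta> n g (act d \<beta> n h x)"
proof -
  have ag: "aut d g" and ah: "aut d h" using g h GFF_aut by blast+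
  have agh: "aut d (g \<circ> h)" using aut_comp[OF ag ah] .
  have fx: "\<forall>v. fst x v < n" using x by (auto simp: Xverts_def)
  have "fst (act d \<beta> n (g \<circ> h) x) v = fst (act d \<beta> n g (act d \<beta> n h x)) v" for v
  proof (cases "v \<in> Verts d")
    case True
    then obtain w where w: "w \<in> Verts d" "(g \<circ> h) w = v" using aut_surj[OF agh] by blast
    have hw: "h w \<in> Verts d" using aut_Verts[OF ah w(1)] .
    have "fst (act d \<beta> n (g \<circ> h) x) v = alpha \<beta> n (locperm d g (h w) \<circ> locperm d h w) (fst x w)"
      using fst_act_apply[OF agh w(1)] w(2) locperm_comp[OF ag ah w(1)] by simp
    also have "\<dots> = alpha \<beta> n (locperm d g (h w)) (alpha \<beta> n (locperm d h w) (fst x w))"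
      using alpha_comp[OF locperm_GFF[OF g hw] locperm_GFF[OF h w(1)]] fx by simp
    also have "\<dots> = fst (act d \<beta> n g (act d \<beta> n h x)) v"
      using fst_act_apply[OF ah w(1)] fst_act_apply[OF ag hw] w(2) by simp
    finally show ?thesis .
  qed (simp add: fst_act_outside)
  then show ?thesis using snd_act[of _ x] snd_act[of g "act d \<beta> n h x"]
    by (metis image_comp prod.collapse ext)
qed

lemma act_id: assumes x: "x \<in> Xverts n d" shows "act d \<beta> n id x = x"
proof -
  obtain f e where x: "x = (f, e)" "\<forall>v. f v < n" "\<forall>v. v \<notin> Verts d \<longrightarrow> f v = 0"
    using assms by (auto simp: Xverts_def)
  show ?thesis using act_eq_iff[OF aut_id x(3)] locperm_id alpha_id x by simp
qed

lemma act_aut_inv: assumes g: "g \<in> GFF d F F'" and x: "x \<in> Xverts n d"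
  shows "act d \<beta> n (aut_inv d g) (act d \<beta> n g x) = x"
  using act_comp[OF GFF_aut_inv[OF g] g x] aut_inv(2)[OF GFF_aut[OF g]] act_id[OF x] by simp

definition orbit :: "(nat list \<Rightarrow> nat) \<times> nat list set \<Rightarrow> ((nat list \<Rightarrow> nat) \<times> nat list set) set" where
  "orbit x = {act d \<beta> n \<gamma> x | \<gamma>. \<gamma> \<in> GFFstar d F F'}"

lemma orbit_act: assumes g: "g \<in> GFFstar d F F'" and x: "x \<in> Xverts n d"
  shows "orbit (act d \<beta> n g x) = orbit x"
proof
  have g': "g \<in> GFF d F F'" using GFFstar_GFF[OF g] .
  show "orbit (act d \<beta> n g x) \<subseteq> orbit x"
  proof
    fix y assume "y \<in> orbit (act d \<beta> n g x)"
    then obtain \<delta> where \<delta>: "\<delta> \<in> GFFstar d F F'" "y = act d \<beta> n \<delta> (act d \<beta> n g x)"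
      by (auto simp: orbit_def)
    then have "y = act d \<beta> n (\<delta> \<circ> g) x" using act_comp[OF GFFstar_GFF[OF \<delta>(1)] g' x] by simp
    then show "y \<in> orbit x" using GFFstar_comp[OF \<delta>(1) g] by (auto simp: orbit_def)
  qed
  show "orbit x \<subseteq> orbit (act d \<beta> n g x)"
  proof
    fix y assume "y \<in> orbit x"
    then obtain \<delta> where \<delta>: "\<delta> \<in> GFFstar d F F'" "y = act d \<beta> n \<delta> x" by (auto simp: orbit_def)
    have gi: "aut_inv d g \<in> GFFstar d F F'" using GFFstar_aut_inv[OF g] .
    have "y = act d \<beta> n (\<delta> \<circ> aut_inv d g) (act d \<beta> n g x)"
      using act_comp[OF GFFstar_GFF[OF \<delta>(1)] GFFstar_GFF[OF gi] act_Xverts[OF g' x]]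
        act_aut_inv[OF g' x] \<delta>(2) by simp
    then show "y \<in> orbit (act d \<beta> n g x)" using GFFstar_comp[OF \<delta>(1) gi] by (auto simp: orbit_def)
  qed
qed

end

section \<open>Transitivity\<close>

text \<open>Words are built by appending letters, so the recursion runs over the reversed word. It
  computes the pair (R w, P w), choosing P w in the coset indexed by f at the image vertex and
  agreeing with the local permutation at the parent on the colour of the connecting edge.\<close>

primrec lift_rev :: "(nat \<Rightarrow> (nat \<Rightarrow> nat) set) \<Rightarrow> (nat list \<Rightarrow> nat) \<Rightarrow> nat list \<Rightarrow> (nat \<Rightarrow> nat)
    \<Rightarrow> nat list \<Rightarrow> nat list \<times> (nat \<Rightarrow> nat)" where
  "lift_rev \<beta> f r p0 [] = ([], p0)"
| "lift_rev \<beta> f r p0 (a # rw) =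
    (let (u, p) = lift_rev \<beta> f r p0 rw; u' = u @ [p a]
     in (u', SOME q. q \<in> \<beta> (f (word_mult r u')) \<and> q a = p a))"

context prescribed_locperm
begin

lemma aut_translate: "r \<in> Verts d \<Longrightarrow> aut d (on_Verts d (word_mult r) \<circ> on_Verts d R)"
  using aut_comp[OF aut_word_mult aut_on_Verts] .

lemma translate_apply:
  "w \<in> Verts d \<Longrightarrow> (on_Verts d (word_mult r) \<circ> on_Verts d R) w = word_mult r (R w)"
  using R_props by (simp add: on_Verts_def)

lemma locperm_translate: assumes r: "r \<in> Verts d" and w: "w \<in> Verts d" and a: "a < d"
  shows "locperm d (on_Verts d (word_mult r) \<circ> on_Verts d R) w a = P w a"
  using locperm_comp[OF aut_word_mult[OF r] aut_on_Verts w]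
    locperm_word_mult[OF r aut_Verts[OF aut_on_Verts w]] locperm_on_Verts[OF w a] by simp

end

context GFF_action
begin

lemma lift_exists:
  assumes f: "\<forall>v. f v < n" and p0: "p0 \<in> \<beta> (f r)"
  obtains R P where "prescribed_locperm d R P" and "P [] = p0"
    and "\<And>w. w \<in> Verts d \<Longrightarrow> P w \<in> \<beta> (f (word_mult r (R w)))"
proof -
  define R where "R w = fst (lift_rev \<beta> f r p0 (rev w))" for w
  define P where "P w = snd (lift_rev \<beta> f r p0 (rev w))" for w
  have R_snoc: "R (w @ [b]) = R w @ [P w b]" for w b
    by (simp add: R_def P_def split_beta Let_def)
  have P_snoc: "P (w @ [b]) = (SOME q. q \<in> \<beta> (f (word_mult r (R (w @ [b])))) \<and> q b = P w b)"
    for w b by (simp add: R_def P_def split_beta Let_def)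
  have choice: "P (w @ [b]) \<in> \<beta> (f (word_mult r (R (w @ [b])))) \<and> P (w @ [b]) b = P w b"
    if "P w \<in> F'" "b < d" for w b
  proof -
    have "\<exists>q. q \<in> \<beta> (f (word_mult r (R (w @ [b])))) \<and> q b = P w b"
      using coset_point[OF f[rule_format] that] by metis
    then show ?thesis unfolding P_snoc by (rule someI_ex)
  qed
  have coset: "P w \<in> \<beta> (f (word_mult r (R w)))" if "w \<in> Verts d" for w
    using that
  proof (induction rule: Verts_induct)
    case Nil then show ?case using p0 by (simp add: R_def P_def)
  next
    case (snoc w b)
    then show ?case using choice coset_subset[OF f[rule_format]] Verts_snoc by blast
  qed
  have P_F': "P w \<in> F'" if "w \<in> Verts d" for w
    using coset[OF that] coset_subset[OF f[rule_format]] by blast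
  have RP: "prescribed_locperm d R P"
  proof
    show "R [] = []" by (simp add: R_def)
    show "R (w @ [b]) = R w @ [P w b]" for w b by (rule R_snoc)
    show "P w ` {..<d} = {..<d}" if "w \<in> Verts d" for w
      using F'.permutes[OF P_F'[OF that]] permutes_image by blast
    show "P (w @ [b]) b = P w b" if "w @ [b] \<in> Verts d" for w b
      using choice P_F' that Verts_snoc by blast
  qed
  have "P [] = p0" by (simp add: P_def)
  then show ?thesis using that[OF RP _ coset] by blast
qed

lemma translate_GFFstar:
  assumes f: "\<forall>v. f v < n" "finite {v. f v \<noteq> 0}" and r: "r \<in> Verts d" "even (length r)"
    and RP: "prescribed_locperm d R P"
    and coset: "\<And>w. w \<in> Verts d \<Longrightarrow> P w \<in> \<beta> (f (word_mult r (R w)))"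
  defines "\<gamma> \<equiv> on_Verts d (word_mult r) \<circ> on_Verts d R"
  shows "\<gamma> \<in> GFFstar d F F'" and "\<And>w. w \<in> Verts d \<Longrightarrow> locperm d \<gamma> w = P w"
proof -
  interpret prescribed_locperm d R P by (rule RP)
  have ag: "aut d \<gamma>" unfolding \<gamma>_def using aut_translate[OF r(1)] .
  have P_F': "P w \<in> F'" if "w \<in> Verts d" for w
    using coset[OF that] coset_subset[OF f(1)[rule_format]] by blast
  show lp: "locperm d \<gamma> w = P w" if w: "w \<in> Verts d" for w
  proof
    fix a show "locperm d \<gamma> w a = P w a"
      using locperm_translate[OF r(1) w] permutes_not_in[OF F'.permutes[OF P_F'[OF w]]]
      unfolding \<gamma>_def by (cases "a < d") (simp_all add: locperm_outside)
  qed
  have "singular \<gamma> \<subseteq> \<gamma> -` {v. f v \<noteq> 0}"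
  proof
    fix w assume "w \<in> singular \<gamma>"
    then have w: "w \<in> Verts d" "P w \<notin> F" using lp by (auto simp: singular_def)
    then have "f (word_mult r (R w)) \<noteq> 0" using coset[OF w(1)] \<beta>0 by metis
    then show "w \<in> \<gamma> -` {v. f v \<noteq> 0}" using translate_apply[OF w(1)] unfolding \<gamma>_def by simp
  qed
  then have "finite (singular \<gamma>)"
    using finite_vimageI[OF f(2) aut_inj[OF ag]] finite_subset by blast
  then have "\<gamma> \<in> GFF d F F'" using ag lp P_F' by (simp add: GFF_iff)
  moreover have "even (length (\<gamma> v)) = even (length v)" if "v \<in> Verts d" for v
    using translate_apply[OF that] even_length_word_mult R_props[OF that] r(2) unfolding \<gamma>_def by simp
  ultimately show "\<gamma> \<in> GFFstar d F F'" by (simp add: GFFstar_def)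
qed

lemma act_root_edge_onto:
  assumes x: "(f, e) \<in> Xverts n d" and r: "r \<in> e" "even (length r)"
    and p0: "p0 \<in> \<beta> (f r)" and a: "a < d" and p0a: "p0 a = ecol e"
  shows "\<exists>\<gamma>\<in>GFFstar d F F'. act d \<beta> n \<gamma> (\<lambda>_. 0, {[], [a]}) = (f, e)"
proof -
  have f: "\<forall>v. f v < n" "\<forall>v. v \<notin> Verts d \<longrightarrow> f v = 0" "finite {v. f v \<noteq> 0}" "e \<in> Edges d"
    using x by (simp_all add: Xverts_def)
  have rV: "r \<in> Verts d" using Edges_subset_Verts[OF f(4)] r(1) by blast
  obtain R P where RP: "prescribed_locperm d R P" and P0: "P [] = p0"
    and coset: "\<And>w. w \<in> Verts d \<Longrightarrow> P w \<in> \<beta> (f (word_mult r (R w)))"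
    using lift_exists[OF f(1) p0] by blast
  interpret prescribed_locperm d R P by (rule RP)
  define \<gamma> where "\<gamma> = on_Verts d (word_mult r) \<circ> on_Verts d R"
  have \<gamma>: "\<gamma> \<in> GFFstar d F F'" "\<And>w. w \<in> Verts d \<Longrightarrow> locperm d \<gamma> w = P w"
    using translate_GFFstar[OF f(1,3) rV r(2) RP coset] unfolding \<gamma>_def by blast+
  have ag: "aut d \<gamma>" using GFF_aut GFFstar_GFF \<gamma>(1) by blast
  have "f (\<gamma> w) = alpha \<beta> n (locperm d \<gamma> w) 0" if w: "w \<in> Verts d" for w
    using alpha_zero_member[OF _ f(1)[rule_format] coset[OF w]] coset_subset[OF f(1)[rule_format]]
      coset[OF w] \<gamma>(2)[OF w] translate_apply[OF w] unfolding \<gamma>_def by (metis subsetD)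
  moreover have "\<gamma> ` {[], [a]} = e"
  proof -
    have "R [a] = [p0 a]" using R_snoc[of "[]" a] R_Nil P0 a by (simp add: Verts_def)
    then have "\<gamma> ` {[], [a]} = {r, nb r (ecol e)}"
      using translate_apply[of "[]"] translate_apply[of "[a]"] a p0a R_Nil
      by (simp add: \<gamma>_def Verts_def word_mult_def)
    then show ?thesis using edge_eq_nb(2)[OF f(4) r(1)] by simp
  qed
  ultimately have "act d \<beta> n \<gamma> (\<lambda>_. 0, {[], [a]}) = (f, e)"
    using act_eq_iff[OF ag f(2)] by blast
  then show ?thesis using \<gamma>(1) by blast
qed

end

context GFF_action
begin

lemma zero_Xverts: "e \<in> Edges d \<Longrightarrow> (\<lambda>_. 0, e) \<in> Xverts n d"
  using n_pos by (simp add: Xverts_def)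

lemma root_edge_orbits_cover:
  assumes x: "x \<in> Xverts n d" obtains a \<gamma> where "a < d" "\<gamma> \<in> GFFstar d F F'"
    "act d \<beta> n \<gamma> (\<lambda>_. 0, {[], [a]}) = x"
proof -
  obtain f e where fe: "x = (f, e)" "\<forall>v. f v < n" "e \<in> Edges d" using x by (auto simp: Xverts_def)
  obtain r where r: "r \<in> e" "even (length r)" using Edges_even_vertex[OF fe(3)] by blast
  obtain p0 where p0: "p0 \<in> \<beta> (f r)" using coset_nonempty fe(2) by blast
  have pp: "p0 permutes {..<d}" using F'.permutes coset_subset fe(2) p0 by blast
  define a where "a = inv p0 (ecol e)"
  have "a < d" "p0 a = ecol e"
    using permutes_in_image[OF permutes_inv[OF pp]] permutes_inverses(1)[OF pp]
      edge_eq_nb(1)[OF fe(3) r(1)] unfolding a_def by auto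
  then show ?thesis using act_root_edge_onto[OF x[unfolded fe(1)] r p0] that fe(1) by blast
qed

lemma finite_orbits: "finite ((\<lambda>x. {act d \<beta> n \<gamma> x | \<gamma>. \<gamma> \<in> GFFstar d F F'}) ` Xverts n d)"
proof -
  have "orbit x \<in> (\<lambda>a. orbit (\<lambda>_. 0, {[], [a]})) ` {..<d}" if x: "x \<in> Xverts n d" for x
  proof -
    obtain a \<gamma> where a: "a < d" "\<gamma> \<in> GFFstar d F F'" "act d \<beta> n \<gamma> (\<lambda>_. 0, {[], [a]}) = x"
      using root_edge_orbits_cover[OF x] .
    then show ?thesis using orbit_act[OF a(2) zero_Xverts[OF root_edge_Edges[OF a(1)]]] by auto
  qed
  then have "orbit ` Xverts n d \<subseteq> (\<lambda>a. orbit (\<lambda>_. 0, {[], [a]})) ` {..<d}" by blast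
  then show ?thesis unfolding orbit_def[symmetric] by (rule finite_surj[OF finite_lessThan])
qed

lemma transitive_root_edge:
  assumes x: "x \<in> Xverts n d" and tr: "transitive_on d F"
  shows "\<exists>\<gamma>\<in>GFFstar d F F'. act d \<beta> n \<gamma> (\<lambda>_. 0, {[], [0]}) = x"
proof -
  obtain f e where fe: "x = (f, e)" "\<forall>v. f v < n" "e \<in> Edges d" using x by (auto simp: Xverts_def)
  obtain r where r: "r \<in> e" "even (length r)" using Edges_even_vertex[OF fe(3)] by blast
  have d0: "0 < d" using d3 by simp
  obtain p0 where "p0 \<in> \<beta> (f r)" "p0 0 = ecol e"
    using coset_point_transitive[OF _ tr d0 edge_eq_nb(1)[OF fe(3) r(1)]] fe(2) by blast
  then show ?thesis using act_root_edge_onto[OF x[unfolded fe(1)] r _ d0] fe(1) by blast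
qed

lemma transitive:
  assumes tr: "transitive_on d F" and x: "x \<in> Xverts n d" and y: "y \<in> Xverts n d"
  shows "\<exists>\<gamma>\<in>GFFstar d F F'. act d \<beta> n \<gamma> x = y"
proof -
  define x0 where "x0 = ((\<lambda>_::nat list. 0::nat), {[], [0::nat]})"
  have x0: "x0 \<in> Xverts n d" unfolding x0_def using zero_Xverts root_edge_Edges d3 by simp
  obtain g1 where g1: "g1 \<in> GFFstar d F F'" "act d \<beta> n g1 x0 = x"
    using transitive_root_edge[OF x tr] x0_def by blast
  obtain g2 where g2: "g2 \<in> GFFstar d F F'" "act d \<beta> n g2 x0 = y"
    using transitive_root_edge[OF y tr] x0_def by blast
  have h1: "g1 \<in> GFF d F F'" and h2: "g2 \<in> GFF d F F'" using g1 g2 GFFstar_GFF by blast+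
  have "act d \<beta> n (g2 \<circ> aut_inv d g1) x = y"
    using act_comp[OF h2 GFF_aut_inv[OF h1] x] act_aut_inv[OF h1 x0] g1(2) g2(2) by simp
  then show ?thesis using GFFstar_comp[OF g2(1) GFFstar_aut_inv[OF g1(1)]] by blast
qed

end

section \<open>Stabilisers\<close>

context GFF_action
begin

lemma stabilizer_zero:
  assumes e: "e \<in> Edges d"
  shows "{\<gamma> \<in> GFF d F F'. act d \<beta> n \<gamma> (\<lambda>_. 0, e) = (\<lambda>_. 0, e)} = {\<gamma> \<in> UF d F. \<gamma> ` e = e}"
proof -
  have "act d \<beta> n \<gamma> (\<lambda>_. 0, e) = (\<lambda>_. 0, e) \<longleftrightarrow> \<gamma> \<in> UF d F \<and> \<gamma> ` e = e"
    if g: "\<gamma> \<in> GFF d F F'" for \<gamma>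
  proof -
    have "(\<forall>w\<in>Verts d. 0 = alpha \<beta> n (locperm d \<gamma> w) 0) \<longleftrightarrow> (\<forall>w\<in>Verts d. locperm d \<gamma> w \<in> F)"
      using alpha_zero_iff[OF locperm_GFF[OF g]] by (metis (no_types, lifting))
    moreover have "act d \<beta> n \<gamma> (\<lambda>_. 0, e) = (\<lambda>_. 0, e) \<longleftrightarrow>
        (\<forall>w\<in>Verts d. 0 = alpha \<beta> n (locperm d \<gamma> w) 0) \<and> \<gamma> ` e = e"
      by (rule act_eq_iff[OF GFF_aut[OF g]]) simp
    moreover have "\<gamma> \<in> UF d F \<longleftrightarrow> (\<forall>w\<in>Verts d. locperm d \<gamma> w \<in> F)"
      using GFF_aut[OF g] by (simp add: UF_def)
    ultimately show ?thesis by blast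
  qed
  then show ?thesis using UF_subset_GFF by blast
qed

lemma free:
  assumes sr: "semiregular_on d F" and \<delta>: "\<delta> \<in> GFFstar d F F'"
    and x: "(f, e) \<in> Xverts n d" and stab: "act d \<beta> n \<delta> (f, e) = (f, e)"
  shows "\<delta> = id"
proof -
  have \<delta>': "\<delta> \<in> GFF d F F'" using GFFstar_GFF[OF \<delta>] .
  have ag: "aut d \<delta>" using GFF_aut[OF \<delta>'] .
  have f: "\<forall>v. f v < n" "\<forall>v. v \<notin> Verts d \<longrightarrow> f v = 0" "e \<in> Edges d"
    using x by (simp_all add: Xverts_def)
  have H: "\<forall>w\<in>Verts d. f (\<delta> w) = alpha \<beta> n (locperm d \<delta> w) (f w)" and He: "\<delta> ` e = e"
    using act_eq_iff[OF ag f(2)] stab by auto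
  have rigid: "locperm d \<delta> w = id"
    if w: "w \<in> Verts d" "\<delta> w = w" and c: "c < d" "locperm d \<delta> w c = c" for w c
  proof (rule semiregular_coset_stabilizer[OF sr locperm_GFF[OF \<delta>' w(1)] f(1)[rule_format] _ c])
    have "alpha \<beta> n (locperm d \<delta> w) (f w) = f w" using H[rule_format, OF w(1)] w(2) by simp
    then show "coset_mult (locperm d \<delta> w) (\<beta> (f w)) = \<beta> (f w)"
      using alpha(2)[OF locperm_GFF[OF \<delta>' w(1)] f(1)[rule_format, of w]] by simp
  qed
  obtain u where u: "u \<in> e" using f(3) Edges_iff by blast
  define c where "c = ecol e"
  have c: "c < d" "e = {u, nb u c}" using edge_eq_nb[OF f(3) u] unfolding c_def by auto
  have uV: "u \<in> Verts d" using Edges_subset_Verts[OF f(3)] u by blast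
  have "\<delta> u \<in> e" using He u by blast
  moreover have "even (length (\<delta> u)) = even (length u)" using \<delta> uV by (simp add: GFFstar_def)
  then have "\<delta> u \<noteq> nb u c" using even_length_nb[of u c] by auto
  ultimately have du: "\<delta> u = u" using c by auto
  have "\<delta> (nb u c) \<in> e" using He c by blast
  moreover have "\<delta> (nb u c) \<noteq> u"
    using du nb_neq[of u c] injD[OF aut_inj[OF ag], of "nb u c" u] by auto
  ultimately have "\<delta> (nb u c) = nb u c" using c by auto
  then have "locperm d \<delta> u = id" using locperm_fixed[OF ag uV c(1) du] rigid[OF uV du c(1)] by simp
  then show ?thesis by (rule aut_eq_id_by_propagation[OF ag uV du]) (fact rigid)
qed

lemma free_unique:
  assumes sr: "semiregular_on d F" and g1: "\<gamma>1 \<in> GFFstar d F F'" and g2: "\<gamma>2 \<in> GFFstar d F F'"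
    and x: "x \<in> Xverts n d" and e: "act d \<beta> n \<gamma>1 x = act d \<beta> n \<gamma>2 x"
  shows "\<gamma>1 = \<gamma>2"
proof -
  have h1: "\<gamma>1 \<in> GFF d F F'" and h2: "\<gamma>2 \<in> GFF d F F'" using g1 g2 GFFstar_GFF by blast+
  have "act d \<beta> n (aut_inv d \<gamma>2 \<circ> \<gamma>1) x = x"
    using act_comp[OF GFF_aut_inv[OF h2] h1 x] e act_aut_inv[OF h2 x] by simp
  then have "aut_inv d \<gamma>2 \<circ> \<gamma>1 = id"
    using free[OF sr GFFstar_comp[OF GFFstar_aut_inv[OF g2] g1], of "fst x" "snd x"] x by simp
  then have "\<gamma>2 \<circ> (aut_inv d \<gamma>2 \<circ> \<gamma>1) = \<gamma>2" by simp
  then show ?thesis using aut_inv(1)[OF GFF_aut[OF h2]] by (simp add: comp_assoc[symmetric])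
qed

end

section \<open>Properness\<close>

lemma aut_if_locally_aut:
  assumes Verts: "\<And>v. v \<in> Verts d \<Longrightarrow> g v \<in> Verts d" and outside: "\<And>x. x \<notin> Verts d \<Longrightarrow> g x = x"
    and local: "\<And>v w. v \<in> Verts d \<Longrightarrow> w \<in> Verts d \<Longrightarrow> \<exists>h. aut d h \<and> h v = g v \<and> h w = g w"
    and onto: "Verts d \<subseteq> g ` Verts d"
  shows "aut d g"
  unfolding aut_def
proof (intro conjI ballI allI impI outside)
  have "inj_on g (Verts d)"
  proof (rule inj_onI)
    fix v w assume v: "v \<in> Verts d" and w: "w \<in> Verts d" and "g v = g w"
    then obtain h where "aut d h" "h v = h w" using local by metis
    then show "v = w" using aut_inj_on v w by (metis inj_onD)
  qed
  then show "bij_betw g (Verts d) (Verts d)" using Verts onto by (auto simp: bij_betw_def)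
next
  fix v w assume v: "v \<in> Verts d" and w: "w \<in> Verts d"
  then obtain h where "aut d h" "h v = g v" "h w = g w" using local by blast
  then show "({g v, g w} \<in> Edges d) = ({v, w} \<in> Edges d)" using aut_edge v w by metis
qed

definition maxlen :: "nat list set \<Rightarrow> nat" where
  "maxlen A = Max (insert 0 (length ` A))"

lemma length_le_maxlen: "finite A \<Longrightarrow> u \<in> A \<Longrightarrow> length u \<le> maxlen A"
  unfolding maxlen_def by (auto intro: Max_ge)

context GFF_action
begin

lemma locperm_aut_inv_comp:
  assumes h: "h \<in> GFF d F F'" and g: "aut d g" and w: "w \<in> Verts d"
    and gw: "locperm d g w \<in> F" "g w \<notin> h ` singular h"
  shows "locperm d (aut_inv d h \<circ> g) w \<in> F"
proof -
  have ah: "aut d h" using GFF_aut[OF h] .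
  have gwV: "g w \<in> Verts d" using aut_Verts[OF g w] .
  have "aut_inv d h (g w) \<notin> singular h" using gw(2) aut_inv_apply(1)[OF ah] by (metis image_eqI)
  then have "locperm d h (aut_inv d h (g w)) \<in> F"
    using aut_Verts[OF aut_inv(3)[OF ah] gwV] by (simp add: singular_def)
  then show ?thesis
    using locperm_comp[OF aut_inv(3)[OF ah] g w] locperm_aut_inv[OF ah gwV] F.comp_mem F.inv_mem gw(1)
    by simp
qed

end

locale transporter_setting = GFF_action +
  fixes fx fy :: "nat list \<Rightarrow> nat" and ex ey :: "nat list set"
  assumes x: "(fx, ex) \<in> Xverts n d" and y: "(fy, ey) \<in> Xverts n d"
begin

definition T :: "(nat list \<Rightarrow> nat list) set" where
  "T = {g \<in> GFF d F F'. act d \<beta> n g (fx, ex) = (fy, ey)}"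

text \<open>Elements of T change the length of a word by at most K, because they map the edge ex onto ey
  and are isometries for the word metric.\<close>

definition K :: nat where "K = maxlen ex + maxlen ey"

lemma x_props: "\<forall>v. fx v < n" "finite {v. fx v \<noteq> 0}" "ex \<in> Edges d"
  using x by (simp_all add: Xverts_def)

lemma y_props: "\<forall>v. v \<notin> Verts d \<longrightarrow> fy v = 0" "finite {v. fy v \<noteq> 0}" "ey \<in> Edges d"
  using y by (simp_all add: Xverts_def)

lemma act_eq_y_iff: assumes "aut d g"
  shows "act d \<beta> n g (fx, ex) = (fy, ey) \<longleftrightarrow>
    (\<forall>w\<in>Verts d. fy (g w) = alpha \<beta> n (locperm d g w) (fx w)) \<and> g ` ex = ey"
  using act_eq_iff[OF assms y_props(1)] .

lemma T_memD: assumes "g \<in> T"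
  shows "g \<in> GFF d F F'" "aut d g" "g ` ex = ey"
    "\<And>w. w \<in> Verts d \<Longrightarrow> fy (g w) = alpha \<beta> n (locperm d g w) (fx w)"
  using assms act_eq_y_iff GFF_aut by (auto simp: T_def)

lemma length_bound: assumes g: "aut d g" and ge: "g ` ex = ey" and w: "w \<in> Verts d"
  shows "length (g w) \<le> K + length w" "length w \<le> K + length (g w)"
proof -
  obtain u where u: "u \<in> ex" using x_props(3) Edges_iff by blast
  have uV: "u \<in> Verts d" using Edges_subset_Verts[OF x_props(3)] u by blast
  have gu: "g u \<in> ey" using ge u by blast
  have lu: "length u \<le> maxlen ex" "length (g u) \<le> maxlen ey"
    using length_le_maxlen finite_Edges x_props(3) y_props(3) u gu by blast+
  then show "length (g w) \<le> K + length w"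
    using aut_length_le[OF g uV w] unfolding K_def by linarith
  show "length w \<le> K + length (g w)"
    using aut_length_le[OF aut_inv(3)[OF g] aut_Verts[OF g uV] aut_Verts[OF g w]] lu
      aut_inv_apply(2)[OF g] unfolding K_def by simp
qed

lemma singular_subset_support:
  assumes g: "aut d g" "\<forall>v\<in>Verts d. locperm d g v \<in> F'"
    and eqs: "\<forall>w\<in>Verts d. fy (g w) = alpha \<beta> n (locperm d g w) (fx w)"
  shows "singular g \<subseteq> {w. fx w \<noteq> 0} \<union> g -` {u. fy u \<noteq> 0}"
proof
  fix w assume w: "w \<in> singular g"
  then have "w \<in> Verts d" "alpha \<beta> n (locperm d g w) 0 \<noteq> 0"
    using alpha_zero_iff g(2) by (auto simp: singular_def)
  then show "w \<in> {w. fx w \<noteq> 0} \<union> g -` {u. fy u \<noteq> 0}" using eqs by (cases "fx w = 0") auto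
qed

definition M :: nat where "M = maxlen {v. fx v \<noteq> 0} + maxlen {v. fy v \<noteq> 0} + K"

lemma locperm_far: assumes g: "g \<in> T" and w: "w \<in> Verts d" and l: "M < length w"
  shows "locperm d g w \<in> F"
proof (rule ccontr)
  assume "locperm d g w \<notin> F"
  then have "fx w \<noteq> 0 \<or> fy (g w) \<noteq> 0"
    using singular_subset_support[OF T_memD(2)[OF g] _ ] T_memD[OF g] locperm_GFF w
    by (auto simp: singular_def)
  then show False using length_le_maxlen x_props(2) y_props(2) length_bound(2)[OF T_memD(2,3)[OF g] w] l
    unfolding M_def by fastforce
qed

text \<open>The candidate images of a vertex under elements of T: a finite set by the length bound.\<close>

definition cand :: "nat list \<Rightarrow> nat list set" where
  "cand v = (if v \<in> Verts d then {u \<in> Verts d. length u \<le> K + length v} else {v})"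

definition Y :: "(nat list \<Rightarrow> nat list) topology" where
  "Y = product_topology (\<lambda>v. discrete_topology (cand v)) UNIV"

lemma topspace_Y: "topspace Y = {g. \<forall>v. g v \<in> cand v}"
  unfolding Y_def topspace_product_topology PiE_UNIV_domain Pi_def topspace_discrete_topology by simp

lemma compact_space_Y: "compact_space Y"
proof -
  have "finite (cand v)" for v using finite_Verts_length_le by (simp add: cand_def)
  then show ?thesis unfolding Y_def compact_space_product_topology
    by (simp add: compact_space_discrete_topology)
qed

lemma T_subset_Y: "T \<subseteq> topspace Y"
proof
  fix g assume g: "g \<in> T"
  have "g v \<in> cand v" for v
    using length_bound(1)[OF T_memD(2,3)[OF g]] aut_Verts[OF T_memD(2)[OF g]]
      aut_outside[OF T_memD(2)[OF g]] by (auto simp: cand_def)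
  then show "g \<in> topspace Y" using topspace_Y by simp
qed

definition agree :: "nat \<Rightarrow> (nat list \<Rightarrow> nat list) \<Rightarrow> (nat list \<Rightarrow> nat list) \<Rightarrow> bool" where
  "agree N h g \<longleftrightarrow> (\<forall>v\<in>Verts d. length v \<le> N \<longrightarrow> h v = g v)"

definition cylinder :: "(nat list \<Rightarrow> nat list) \<Rightarrow> nat \<Rightarrow> (nat list \<Rightarrow> nat list) set" where
  "cylinder g N = PiE UNIV (\<lambda>v. if v \<in> Verts d \<and> length v \<le> N then {g v} else cand v)"

lemma mem_cylinder_iff: "h \<in> cylinder g N \<longleftrightarrow> (\<forall>v. v \<in> Verts d \<and> length v \<le> N \<longrightarrow> h v = g v)
   \<and> (\<forall>v. \<not> (v \<in> Verts d \<and> length v \<le> N) \<longrightarrow> h v \<in> cand v)"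
  unfolding cylinder_def by (auto simp: PiE_UNIV_domain Pi_iff split: if_splits)

lemma cylinder_iff: "h \<in> topspace Y \<Longrightarrow> h \<in> cylinder g N \<longleftrightarrow> agree N h g"
  unfolding agree_def mem_cylinder_iff using topspace_Y by auto

lemma openin_cylinder: assumes g: "g \<in> topspace Y" shows "openin Y (cylinder g N)"
  unfolding Y_def cylinder_def
proof (rule product_topology_basis)
  show "openin (discrete_topology (cand v)) (if v \<in> Verts d \<and> length v \<le> N then {g v} else cand v)"
    for v using g topspace_Y by auto
  have "{v. (if v \<in> Verts d \<and> length v \<le> N then {g v} else cand v) \<noteq> topspace (discrete_topology (cand v))}
        \<subseteq> {v \<in> Verts d. length v \<le> N}" by auto
  then show "finite {v. (if v \<in> Verts d \<and> length v \<le> N then {g v} else cand v) \<noteq> topspace (discrete_topology (cand v))}"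
    using finite_Verts_length_le finite_subset by blast
qed

lemma cylinder_subset_Y: assumes "g \<in> topspace Y" shows "cylinder g N \<subseteq> topspace Y"
proof
  fix h assume h: "h \<in> cylinder g N"
  have "h v \<in> cand v" for v
    using h assms unfolding mem_cylinder_iff topspace_Y by (cases "v \<in> Verts d \<and> length v \<le> N") auto
  then show "h \<in> topspace Y" using topspace_Y by simp
qed

lemma cylinder_self: "g \<in> topspace Y \<Longrightarrow> g \<in> cylinder g N"
  using cylinder_iff agree_def by auto

lemma agree_locperm: assumes "agree N h g" "v \<in> Verts d" "length v < N"
  shows "locperm d h v = locperm d g v"
proof (rule locperm_cong)
  show "h v = g v" using assms unfolding agree_def by simp
  fix a assume a: "a < d"
  have "length (nb v a) \<le> N" using length_nb[of v a] assms(3) by auto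
  then show "h (nb v a) = g (nb v a)" using assms(1) nb_Verts[OF assms(2) a] unfolding agree_def by blast
qed

lemma aut_limit:
  assumes gY: "g \<in> topspace Y" and approx: "\<And>N. \<exists>h\<in>T. agree N h g"
  shows "aut d g"
proof -
  have gc: "g v \<in> cand v" for v using gY topspace_Y by simp
  have gV: "g v \<in> Verts d" if "v \<in> Verts d" for v using gc[of v] that by (simp add: cand_def)
  have gout: "g v = v" if "v \<notin> Verts d" for v using gc[of v] that by (simp add: cand_def)
  have onto: "Verts d \<subseteq> g ` Verts d"
  proof
    fix u assume u: "u \<in> Verts d"
    obtain h where h: "h \<in> T" "agree (K + length u) h g" using approx by blast
    obtain w where w: "w \<in> Verts d" "h w = u" using aut_surj[OF T_memD(2)[OF h(1)] u] by blast
    have "length w \<le> K + length u" using length_bound(2)[OF T_memD(2,3)[OF h(1)] w(1)] w(2) by simp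
    then have "g w = u" using h(2) w unfolding agree_def by simp
    then show "u \<in> g ` Verts d" using w(1) by blast
  qed
  show ?thesis
  proof (rule aut_if_locally_aut[OF gV gout _ onto])
    fix v w assume vw: "v \<in> Verts d" "w \<in> Verts d"
    obtain h where h: "h \<in> T" "agree (length v + length w) h g" using approx by blast
    then have "h v = g v" "h w = g w" using vw unfolding agree_def by simp_all
    then show "\<exists>h. aut d h \<and> h v = g v \<and> h w = g w" using T_memD(2)[OF h(1)] by blast
  qed
qed

lemma limit_locperm:
  assumes approx: "\<And>N. \<exists>h\<in>T. agree N h g" and v: "v \<in> Verts d"
  obtains h where "h \<in> T" "locperm d g v = locperm d h v" "g v = h v"
proof -
  obtain h where h: "h \<in> T" "agree (Suc (length v)) h g" using approx by blast
  then have "locperm d g v = locperm d h v" "g v = h v"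
    using agree_locperm[OF h(2) v] v unfolding agree_def by simp_all
  then show ?thesis using h(1) that by blast
qed

lemma limit_mem_T:
  assumes gY: "g \<in> topspace Y" and approx: "\<And>N. \<exists>h\<in>T. agree N h g"
  shows "g \<in> T"
proof -
  have ag: "aut d g" using aut_limit[OF gY approx] .
  have F': "\<forall>v\<in>Verts d. locperm d g v \<in> F'"
  proof
    fix v assume v: "v \<in> Verts d"
    then obtain h where "h \<in> T" "locperm d g v = locperm d h v" using limit_locperm[OF approx] by metis
    then show "locperm d g v \<in> F'" using locperm_GFF[OF T_memD(1) v] by simp
  qed
  have eqs: "\<forall>w\<in>Verts d. fy (g w) = alpha \<beta> n (locperm d g w) (fx w)"
  proof
    fix w assume w: "w \<in> Verts d"
    then obtain h where "h \<in> T" "locperm d g w = locperm d h w" "g w = h w"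
      using limit_locperm[OF approx] by metis
    then show "fy (g w) = alpha \<beta> n (locperm d g w) (fx w)" using T_memD(4)[OF _ w] by simp
  qed
  have "g ` ex = ey"
  proof -
    obtain h where h: "h \<in> T" "agree (maxlen ex) h g" using approx by blast
    then have "\<forall>u\<in>ex. h u = g u"
      using length_le_maxlen[OF finite_Edges[OF x_props(3)]] Edges_subset_Verts[OF x_props(3)]
      unfolding agree_def by blast
    then have "h ` ex = g ` ex" by (simp cong: image_cong)
    then show ?thesis using T_memD(3)[OF h(1)] by simp
  qed
  then have "act d \<beta> n g (fx, ex) = (fy, ey)" using act_eq_y_iff[OF ag] eqs by blast
  moreover have "finite (singular g)"
    using singular_subset_support[OF ag F' eqs] x_props(2) finite_vimageI[OF y_props(2) aut_inj[OF ag]]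
    by (meson finite_UnI finite_subset)
  ultimately show ?thesis using ag F' by (simp add: T_def GFF_iff)
qed

lemma closedin_T: "closedin Y T"
  unfolding closedin_def
proof (intro conjI T_subset_Y)
  show "openin Y (topspace Y - T)"
  proof (subst openin_subopen, intro ballI)
    fix g assume g: "g \<in> topspace Y - T"
    have "\<exists>N. \<forall>h\<in>T. \<not> agree N h g"
    proof (rule ccontr)
      assume "\<nexists>N. \<forall>h\<in>T. \<not> agree N h g"
      then have "\<And>N. \<exists>h\<in>T. agree N h g" by blast
      then have "g \<in> T" using limit_mem_T g by blast
      then show False using g by blast
    qed
    then obtain N where N: "\<forall>h\<in>T. \<not> agree N h g" by blast
    have "cylinder g N \<subseteq> topspace Y - T"
    proof
      fix h assume h: "h \<in> cylinder g N"
      then have hY: "h \<in> topspace Y" using cylinder_subset_Y g by blast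
      then have "agree N h g" using cylinder_iff h by blast
      then show "h \<in> topspace Y - T" using hY N by blast
    qed
    moreover have "openin Y (cylinder g N)" "g \<in> cylinder g N"
      using openin_cylinder cylinder_self g by simp_all
    ultimately show "\<exists>U. openin Y U \<and> g \<in> U \<and> U \<subseteq> topspace Y - T" by blast
  qed
qed

lemma compactin_T: "compactin Y T"
  using closedin_compact_space[OF compact_space_Y closedin_T] .

end

context GFF_action
begin

definition basic_open :: "(nat list \<Rightarrow> nat list) \<Rightarrow> nat list set \<Rightarrow> (nat list \<Rightarrow> nat list) set" where
  "basic_open h S = (\<lambda>k. h \<circ> k) ` {k \<in> UF d F. \<forall>s\<in>S. k s = s}"

definition basic_opens :: "(nat list \<Rightarrow> nat list) set set" where
  "basic_opens = {basic_open h S | h S. h \<in> GFF d F F' \<and> finite S \<and> S \<subseteq> Verts d}"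

lemma GFF_top_eq: "GFF_top d F F' = subtopology (topology_generated_by basic_opens) (GFF d F F')"
  by (simp add: GFF_top_def basic_opens_def basic_open_def)

lemma GFF_subset_basic_opens: "GFF d F F' \<subseteq> \<Union>basic_opens"
proof
  fix h assume h: "h \<in> GFF d F F'"
  have "h \<in> basic_open h {}" using id_UF by (auto simp: basic_open_def intro: image_eqI[where x = id])
  moreover have "basic_open h {} \<in> basic_opens" unfolding basic_opens_def using h by blast
  ultimately show "h \<in> \<Union>basic_opens" by blast
qed

lemma topspace_GFF_top: "topspace (GFF_top d F F') = GFF d F F'"
  unfolding GFF_top_eq using GFF_subset_basic_opens by auto

end

context transporter_setting
begin

text \<open>On T, membership in a basic open set is decided by the values on a finite ball: near the root
  the local permutations are those of a given element, and far away they lie in F anyway.\<close>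

lemma basic_open_local:
  assumes h: "h \<in> GFF d F F'" and S: "finite S" "S \<subseteq> Verts d"
    and g0: "g0 \<in> basic_open h S" "g0 \<in> T"
  obtains N where "\<And>g. g \<in> T \<Longrightarrow> agree N g g0 \<Longrightarrow> g \<in> basic_open h S"
proof -
  have ah: "aut d h" using GFF_aut[OF h] .
  have ahi: "aut d (aut_inv d h)" using aut_inv(3)[OF ah] .
  obtain k0 where k0: "k0 \<in> UF d F" "\<forall>s\<in>S. k0 s = s" "g0 = h \<circ> k0"
    using g0(1) by (auto simp: basic_open_def)
  have k0_eq: "k0 = aut_inv d h \<circ> g0" using k0(3) aut_inv(2)[OF ah] by (simp add: comp_assoc[symmetric])
  define N where "N = M + maxlen (h ` singular h) + K + maxlen S + 1"
  have "g \<in> basic_open h S" if g: "g \<in> T" and agr: "agree N g g0" for g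
  proof -
    have ag: "aut d g" using T_memD(2)[OF g] .
    define k where "k = aut_inv d h \<circ> g"
    have gk: "g = h \<circ> k" unfolding k_def using aut_inv(1)[OF ah] by (simp add: comp_assoc[symmetric])
    have "locperm d k w \<in> F" if w: "w \<in> Verts d" for w
    proof (cases "length w < N")
      case True
      have "locperm d k w = locperm d (aut_inv d h) (g0 w) \<circ> locperm d g0 w"
        using locperm_comp[OF ahi ag w] agree_locperm[OF agr w True] agr w True
        unfolding k_def agree_def by simp
      also have "\<dots> = locperm d k0 w"
        using locperm_comp[OF ahi T_memD(2)[OF g0(2)] w] k0_eq by simp
      finally show ?thesis using k0(1) w by (simp add: UF_def)
    next
      case False
      have "g w \<notin> h ` singular h"
      proof
        assume "g w \<in> h ` singular h"
        then have "length (g w) \<le> maxlen (h ` singular h)"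
          using length_le_maxlen finite_singular[OF h] by blast
        then show False using length_bound(2)[OF ag T_memD(3)[OF g] w] False unfolding N_def by linarith
      qed
      moreover have "locperm d g w \<in> F" using locperm_far[OF g w] False unfolding N_def by linarith
      ultimately show ?thesis using locperm_aut_inv_comp[OF h ag w] unfolding k_def by blast
    qed
    then have "k \<in> UF d F" using aut_comp[OF ahi ag] by (simp add: UF_def k_def)
    moreover have "k s = s" if s: "s \<in> S" for s
    proof -
      have "length s < N" using length_le_maxlen[OF S(1) s] unfolding N_def by linarith
      then have "g s = g0 s" using agr s S(2) unfolding agree_def by auto
      then show ?thesis using k0(2) s unfolding k_def k0_eq by simp
    qed
    ultimately show ?thesis using gk by (auto simp: basic_open_def)
  qed
  then show ?thesis using that by blast
qed

lemma openin_basic_open_T: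
  assumes h: "h \<in> GFF d F F'" and S: "finite S" "S \<subseteq> Verts d"
  shows "openin (subtopology Y T) (basic_open h S \<inter> T)"
proof (subst openin_subopen, intro ballI)
  fix g0 assume g0: "g0 \<in> basic_open h S \<inter> T"
  then obtain N where N: "\<And>g. g \<in> T \<Longrightarrow> agree N g g0 \<Longrightarrow> g \<in> basic_open h S"
    using basic_open_local[OF h S] by blast
  have g0Y: "g0 \<in> topspace Y" using T_subset_Y g0 by blast
  have "openin (subtopology Y T) (cylinder g0 N \<inter> T)"
    unfolding openin_subtopology using openin_cylinder[OF g0Y] by blast
  moreover have "g0 \<in> cylinder g0 N \<inter> T" using cylinder_self[OF g0Y] g0 by blast
  moreover have "cylinder g0 N \<inter> T \<subseteq> basic_open h S \<inter> T"
    using N cylinder_iff T_subset_Y by blast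
  ultimately show "\<exists>U. openin (subtopology Y T) U \<and> g0 \<in> U \<and> U \<subseteq> basic_open h S \<inter> T" by blast
qed

lemma continuous_map_id_T: "continuous_map (subtopology Y T) (GFF_top d F F') id"
  unfolding GFF_top_eq
proof (rule continuous_map_into_subtopology)
  have ts: "topspace (subtopology Y T) = T" using T_subset_Y by auto
  show "id \<in> topspace (subtopology Y T) \<rightarrow> GFF d F F'" using ts by (auto simp: T_def)
  show "continuous_map (subtopology Y T) (topology_generated_by basic_opens) id"
  proof (rule continuous_on_generated_topo)
    fix U assume "U \<in> basic_opens"
    then obtain h S where "U = basic_open h S" "h \<in> GFF d F F'" "finite S" "S \<subseteq> Verts d"
      unfolding basic_opens_def by blast
    then show "openin (subtopology Y T) (id -` U \<inter> topspace (subtopology Y T))"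
      using openin_basic_open_T ts by simp
  next
    show "id ` topspace (subtopology Y T) \<subseteq> \<Union>basic_opens"
      using ts GFF_subset_basic_opens by (auto simp: T_def)
  qed
qed

lemma compactin_transporter:
  "compactin (GFF_top d F F') {g \<in> topspace (GFF_top d F F'). act d \<beta> n g (fx, ex) = (fy, ey)}"
proof -
  have "compactin (subtopology Y T) T" using compactin_T compactin_subtopology by blast
  then have "compactin (GFF_top d F F') (id ` T)" using image_compactin continuous_map_id_T by blast
  then show ?thesis using topspace_GFF_top by (simp add: T_def)
qed

end

context GFF_action
begin

lemma proper: "proper_action (GFF_top d F F') (act d \<beta> n) (Xverts n d)"
  unfolding proper_action_def
proof (intro ballI)
  fix x y assume x: "x \<in> Xverts n d" and y: "y \<in> Xverts n d"
  interpret transporter_setting d n F F' \<beta> "fst x" "fst y" "snd x" "snd y"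
    using x y by unfold_locales simp_all
  show "compactin (GFF_top d F F') {g \<in> topspace (GFF_top d F F'). act d \<beta> n g x = y}"
    using compactin_transporter by simp
qed

end

theorem proposition2:
  fixes d n :: nat and F F' :: "(nat \<Rightarrow> nat) set"
    and \<beta> :: "nat \<Rightarrow> (nat \<Rightarrow> nat) set"
  assumes d3: "d \<ge> 3"
    and F: "perm_group d F" and F': "perm_group d F'" and FF': "F \<subseteq> F'"
    and orb: "preserves_orbits d F F'"
    and n: "n = card (lcosets F' F)"
    and \<beta>: "bij_betw \<beta> {..<n} (lcosets F' F)" and \<beta>0: "\<beta> 0 = F"
  shows
    "finite ((\<lambda>x. {act d \<beta> n \<gamma> x | \<gamma>. \<gamma> \<in> GFFstar d F F'}) ` Xverts n d)
     \<and> (transitive_on d F \<longrightarrow>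
          (\<forall>x\<in>Xverts n d. \<forall>y\<in>Xverts n d. \<exists>\<gamma>\<in>GFFstar d F F'. act d \<beta> n \<gamma> x = y))
     \<and> (\<forall>e\<in>Edges d. {\<gamma> \<in> GFF d F F'. act d \<beta> n \<gamma> (\<lambda>_. 0, e) = (\<lambda>_. 0, e)}
                     = {\<gamma> \<in> UF d F. \<gamma> ` e = e})
     \<and> proper_action (GFF_top d F F') (act d \<beta> n) (Xverts n d)
     \<and> (regular_on d F \<longrightarrow>
          (\<forall>x\<in>Xverts n d. \<forall>y\<in>Xverts n d. \<exists>!\<gamma>. \<gamma> \<in> GFFstar d F F' \<and> act d \<beta> n \<gamma> x = y))"
proof -
  interpret GFF_action d n F F' \<beta>
    using assms by unfold_locales
  have "\<exists>!\<gamma>. \<gamma> \<in> GFFstar d F F' \<and> act d \<beta> n \<gamma> x = y"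
    if "regular_on d F" "x \<in> Xverts n d" "y \<in> Xverts n d" for x y
    using transitive[of x y] free_unique[of _ _ x] that by (auto simp: regular_on_def)
  then show ?thesis
    using finite_orbits transitive stabilizer_zero proper by blast
qed

end
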